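(* Let $x_j\to x_0$ in $\mathbb{T}^1$ and $y_j\to y_0$ with $y_j,y_0\in[0,1]$ (convergence in $\mathbb{R}$). Then for every integer $n\ge0$, $$\mu^n_{x_0}[0,y_0)\le\liminf_{j\to\infty}\mu^n_{x_j}[0,y_j]\le\limsup_{j\to\infty}\mu^n_{x_j}[0,y_j]\le\mu^n_{x_0}[0,y_0],$$ and $$\mu_{x_0}[0,y_0)\le\liminf_{j\to\infty}\mu_{x_j}[0,y_j]\le\limsup_{j\to\infty}\mu_{x_j}[0,y_j]\le\mu_{x_0}[0,y_0].$$ In particular, if $(x,y)\mapsto\mu_x[0,y]$ is discontinuous at $(x_0,y_0)$ then $\mu_{x_0}(\{y_0\})>0$.
   Context: Notation: $\mathbb{T}^1=\mathbb{R}/\mathbb{Z}$, $\mathbb{T}^2=\mathbb{T}^1\times\mathbb{T}^1$, $\lambda$ is Lebesgue probability measure on $\mathbb{T}^1$. For reals $a\le b\le a+1$, $[a,b]$ (resp. $[a,b)$) denotes the image in $\mathbb{T}^1$ of the real interval $[a,b]$ (resp. $[a,b)$); so $[0,1]=\mathbb{T}^1$, $[0,0]=\{0\}$. $P(x,y)=(x+\tfrac12,1-y)$ on $\mathbb{T}^2$. Standing setup: $\alpha$ is irrational, $R(x)=x+\alpha$ on $\mathbb{T}^1$. $r:\mathbb{T}^1\to\mathbb{R}$ is continuous with $r(x+\tfrac12)=-r(x)$, $r(0)=r(\tfrac12)=0$, $0<r(x)<\tfrac14$ for $x\in(0,\tfrac12)$, and such that $S(x,y)=(x+\alpha,\,y+r(x))$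 is a minimal homeomorphism of $\mathbb{T}^2$. Put $\sigma_x(y)=y+r(x)$, $\sigma_x^0=\mathrm{id}$, $\sigma^n_x=\sigma_{R^{n-1}(x)}\circ\cdots\circ\sigma_{R(x)}\circ\sigma_x$ ($n\ge1$), so $S^n(x,y)=(R^n(x),\sigma^n_x(y))$. Fix $x_1^*\in(0.1,0.2)\cap\mathbb{Q}$, $x_2^*=x_1^*+\tfrac12$, $y_1^*\in\mathbb{T}^1$, $y_2^*=1-y_1^*$, $z_j^*=(x_j^*,y_j^* )$, such that for all $m\in\mathbb{Z}$ and $j=1,2$ the second coordinate $Y$ of $S^m(z_j^* )$ satisfies $Y\neq0$ and $Y\ne -r(R^m(x_j^* ))$. Fix $\bar x_1<x_1^*<\bar x_2$ with $[\bar x_1,\bar x_2]\subset(0,\tfrac12)$ and continuous $\tilde\psi,\tilde\phi:[\bar x_1,\bar x_2]\to[0,1]$ with $\tilde\psi(\bar x_1)=0$, $\tilde\phi(\bar x_1)=1$, $\tilde\psi(\bar x_2)=1$, $\tilde\phi(\bar x_2)=0$, $\tilde\psi<\tilde\phi$ on $[\bar x_1,x_1^* )$, $\tilde\psi>\tilde\phi$ on $(x_1^*,\bar x_2]$, and $\tilde\psi(x_1^* )=\tilde\phi(x_1^* )\equiv y_1^*\pmod 1$. Define Borel probability measures $\mu_x^0$ on $\mathbb{T}^1$: $\mu^0_x=\lambda$ if $x\notin(\bar x_1,\bar x_2)\cup(\bar x_1+\tfrac12,\bar x_2+\tfrac12)$; $\mu^0_{x_j^*}=\delta_{y_j^*}$;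 for $x\in(\bar x_1,\bar x_2)\setminus\{x_1^*\}$, $\mu^0_x(A)=\lambda(A\cap I_x)/|\tilde\phi(x)-\tilde\psi(x)|$ where $I_x$ is the image in $\mathbb{T}^1$ of the real interval with endpoints $\tilde\psi(x),\tilde\phi(x)$; for $x=u+\tfrac12$ with $u\in(\bar x_1,\bar x_2)\setminus\{x_1^*\}$, $\mu^0_x(A)=\mu^0_u(\{1-y:y\in A\})$. For $n\ge0$ let $\mu^n_x(A)=\mu^0_{R^n(x)}(\sigma^n_x(A))$, and $\mu_x=\tfrac12\big(\lambda+\sum_{n\ge0}2^{-n-1}\mu^n_x\big)$. *)

theory Defs
  imports "HOL-Analysis.Analysis"
begin

text \<open>Conventions. A point of the circle T1 = R/Z is represented by any real
lift; a subset A of real numbers represents its image in T1.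
All functions on T1 below are 1-periodic in their real arguments.\<close>

definition per :: "real set \<Rightarrow> real set" where
  "per A = {t. \<exists>k::int. t + of_int k \<in> A}"

definition leb :: "real set \<Rightarrow> real" where
  "leb A = measure lborel (per A \<inter> {0..<1})"

definition dirac :: "real \<Rightarrow> real set \<Rightarrow> real" where
  "dirac y A = (if y \<in> per A then 1 else 0)"

definition tdist :: "real \<Rightarrow> real \<Rightarrow> real" where
  "tdist a b = \<bar>(a - b) - of_int (round (a - b))\<bar>"

text \<open>mu^0_u for u in (xb1,xb2) minus x1s: normalized Lebesgue on the arc I_u
  between psi u and phi u.\<close>
definition mu0_left :: "(real \<Rightarrow> real) \<Rightarrow> (real \<Rightarrow> real) \<Rightarrow> real \<Rightarrow> real set \<Rightarrow> real" where
  "mu0_left psi phi u A =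
     leb (per A \<inter> per {min (psi u) (phi u) .. max (psi u) (phi u)}) / \<bar>phi u - psi u\<bar>"

definition mu0 :: "real \<Rightarrow> real \<Rightarrow> real \<Rightarrow> real \<Rightarrow> (real \<Rightarrow> real) \<Rightarrow> (real \<Rightarrow> real)
                   \<Rightarrow> real \<Rightarrow> real set \<Rightarrow> real" where
  "mu0 xb1 xb2 x1s y1s psi phi x A =
     (let u = frac x in
      if u = x1s then dirac y1s A
      else if u = x1s + 1/2 then dirac (1 - y1s) A
      else if xb1 < u \<and> u < xb2 then mu0_left psi phi u A
      else if xb1 + 1/2 < u \<and> u < xb2 + 1/2
        then mu0_left psi phi (u - 1/2) ((\<lambda>y. 1 - y) ` A)
      else leb A)"

text \<open>sigma^n_x(y) = y + shift, with shift = sum_{k<n} r(R^k x).\<close>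
definition cocycle :: "real \<Rightarrow> (real \<Rightarrow> real) \<Rightarrow> nat \<Rightarrow> real \<Rightarrow> real" where
  "cocycle \<alpha> r n x = (\<Sum>k<n. r (x + real k * \<alpha>))"

definition mun :: "real \<Rightarrow> (real \<Rightarrow> real) \<Rightarrow> real \<Rightarrow> real \<Rightarrow> real \<Rightarrow> real \<Rightarrow> (real \<Rightarrow> real)
                   \<Rightarrow> (real \<Rightarrow> real) \<Rightarrow> nat \<Rightarrow> real \<Rightarrow> real set \<Rightarrow> real" where
  "mun \<alpha> r xb1 xb2 x1s y1s psi phi n x A =
     mu0 xb1 xb2 x1s y1s psi phi (x + real n * \<alpha>) ((\<lambda>y. y + cocycle \<alpha> r n x) ` A)"

definition mu :: "real \<Rightarrow> (real \<Rightarrow> real) \<Rightarrow> real \<Rightarrow> real \<Rightarrow> real \<Rightarrow> real \<Rightarrow> (real \<Rightarrow> real)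
                   \<Rightarrow> (real \<Rightarrow> real) \<Rightarrow> real \<Rightarrow> real set \<Rightarrow> real" where
  "mu \<alpha> r xb1 xb2 x1s y1s psi phi x A =
     (leb A + (\<Sum>n. (1/2) ^ (n + 1) * mun \<alpha> r xb1 xb2 x1s y1s psi phi n x A)) / 2"

definition Smap :: "real \<Rightarrow> (real \<Rightarrow> real) \<Rightarrow> real \<times> real \<Rightarrow> real \<times> real" where
  "Smap \<alpha> r z = (fst z + \<alpha>, snd z + r (fst z))"

definition Sinv :: "real \<Rightarrow> (real \<Rightarrow> real) \<Rightarrow> real \<times> real \<Rightarrow> real \<times> real" where
  "Sinv \<alpha> r z = (fst z - \<alpha>, snd z - r (fst z - \<alpha>))"

definition Spow :: "real \<Rightarrow> (real \<Rightarrow> real) \<Rightarrow> int \<Rightarrow> real \<times> real \<Rightarrow> real \<times> real" where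
  "Spow \<alpha> r m = (if 0 \<le> m then Smap \<alpha> r ^^ nat m else Sinv \<alpha> r ^^ nat (- m))"

text \<open>Minimality of S on T2: every closed S-invariant subset of T2 (represented as
  a Z^2-periodic closed subset of R^2) is empty or everything.\<close>
definition minimal_S :: "real \<Rightarrow> (real \<Rightarrow> real) \<Rightarrow> bool" where
  "minimal_S \<alpha> r \<longleftrightarrow>
     (\<forall>K :: (real \<times> real) set.
        closed K
        \<and> (\<forall>x y. (x, y) \<in> K \<longleftrightarrow> (x + 1, y) \<in> K)
        \<and> (\<forall>x y. (x, y) \<in> K \<longleftrightarrow> (x, y + 1) \<in> K)
        \<and> Smap \<alpha> r ` K = K
        \<longrightarrow> K = {} \<or> K = UNIV)"

end

theory Submission
  imports Defs
begin

(* The measure mu^n_x evaluated on an arc [0,y] equals mu^0_u on the translated arc [c, c+y], where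
   u = R^n x and c = sigma^n_x(0) depend continuously on x.  So everything reduces to the behaviour of
   (u, c, y) |-> mu^0_u[c, c+y]:
   - away from the two atoms x1s, x1s + 1/2 this map is continuous: mu^0_u is normalised Lebesgue
     measure on an arc whose endpoints move continuously (or plain Lebesgue measure), and the mass of
     the intersection of two arcs is Lipschitz in the four endpoints;
   - near an atom, mu^0_u is concentrated on a short arc shrinking to the atom, so the mass of [c, c+y]
     is eventually 0 or 1 as soon as the atom is not an endpoint of the limit arc; the left endpoint c
     is excluded by the orbit hypothesis, the right endpoint is why the lower bound uses [0, y0).
   The series defining mu_x converges uniformly, so the one-sided bounds pass to mu_x, and
   finally a discontinuity of (x, y) |-> mu_x[0, y] forces the lower and upper bounds to differ,
   i.e. mu_x({y0}) > 0. *)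

section \<open>Arcs of the circle and their Lebesgue measure\<close>

lemma per_mono: "A \<subseteq> B \<Longrightarrow> per A \<subseteq> per B"
  unfolding per_def by auto

lemma per_Un: "per (A \<union> B) = per A \<union> per B"
  unfolding per_def by auto

lemma per_per [simp]: "per (per A) = per A"
  unfolding per_def
  by auto (metis add.assoc of_int_add, metis add.right_neutral of_int_0)

lemma per_shift_int: "t + of_int m \<in> per A \<longleftrightarrow> t \<in> per A"
  unfolding per_def
  by auto (metis add.assoc of_int_add,
           metis add.commute add.left_commute add_diff_cancel_left' diff_add_cancel of_int_add of_int_diff)

lemma borel_per: assumes "A \<in> sets borel" shows "per A \<in> sets borel"
proof -
  have "per A = (\<Union>k\<in>(UNIV::int set). (\<lambda>t. t + of_int k) -` A)"
    unfolding per_def by auto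
  moreover have "(\<lambda>t::real. t + of_int k) -` A \<in> sets borel" for k
    using assms by (intro measurable_sets_borel[OF _ assms]) auto
  ultimately show ?thesis by auto
qed

lemma fmeasurable_unit_interval:
  assumes "A \<in> sets borel" "A \<subseteq> {0..<1::real}"
  shows "A \<in> fmeasurable lborel"
proof -
  have "emeasure lborel A \<le> emeasure lborel {0..<1::real}"
    using assms by (intro emeasure_mono) auto
  then show ?thesis
    using assms by (auto simp: fmeasurable_def less_top[symmetric] top_unique dest: order.trans)
qed

lemma leb_nonneg: "0 \<le> leb A"
  by (simp add: leb_def)

lemma leb_per [simp]: "leb (per A) = leb A"
  by (simp add: leb_def)

lemma leb_mono: "per A \<subseteq> per B \<Longrightarrow> B \<in> sets borel \<Longrightarrow> leb A \<le> leb B"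
proof (cases "per A \<inter> {0..<1} \<in> sets borel")
  case True
  assume "per A \<subseteq> per B" "B \<in> sets borel"
  then show ?thesis unfolding leb_def
    by (intro measure_mono_fmeasurable)
      (use True in \<open>auto intro!: fmeasurable_unit_interval borel_per\<close>)
next
  case False then show ?thesis by (simp add: leb_def measure_notin_sets)
qed

lemma leb_le1: "leb A \<le> 1"
proof (cases "per A \<inter> {0..<1} \<in> sets borel")
  case True
  have "measure lborel (per A \<inter> {0..<1}) \<le> measure lborel {0..<1::real}"
    by (rule measure_mono_fmeasurable) (use True in \<open>auto intro: fmeasurable_unit_interval\<close>)
  then show ?thesis by (simp add: leb_def)
next
  case False then show ?thesis by (simp add: leb_def measure_notin_sets)
qed

lemma leb_Un: "A \<in> sets borel \<Longrightarrow> B \<in> sets borel \<Longrightarrow> leb (A \<union> B) \<le> leb A + leb B"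
  unfolding leb_def per_Un Int_Un_distrib2
  by (intro measure_Un_le) (auto intro!: borel_per)

lemma leb_Un_le:
  "A \<in> sets borel \<Longrightarrow> B \<in> sets borel \<Longrightarrow> leb A \<le> a \<Longrightarrow> leb B \<le> b \<Longrightarrow> leb (A \<union> B) \<le> a + b"
  using leb_Un[of A B] by linarith

lemma leb_empty: "leb {} = 0"
  by (simp add: leb_def per_def)

lemma per_Icc_iff:
  assumes "0 \<le> y" "y \<le> 1"
  shows "t \<in> per {c..c+y} \<longleftrightarrow> frac (t - c) \<le> y"
proof
  assume "t \<in> per {c..c+y}"
  then obtain k::int where k: "c \<le> t + k" "t + k \<le> c + y" by (auto simp: per_def)
  show "frac (t - c) \<le> y"
  proof (cases "t + k - c < 1")
    case True
    have "frac (t - c) = frac ((t + k - c) + of_int (-k))" by simp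
    also have "\<dots> = t + k - c" using True k by (simp only: frac_add_of_int_right frac_eq) simp
    finally show ?thesis using k by simp
  next
    case False
    then show ?thesis using assms frac_lt_1[of "t-c"] k by linarith
  qed
next
  assume h: "frac (t - c) \<le> y"
  have "t + of_int (- \<lfloor>t - c\<rfloor>) = c + frac (t - c)" by (simp add: frac_def)
  then show "t \<in> per {c..c+y}" unfolding per_def using h frac_ge_0[of "t-c"]
    by (intro CollectI exI[of _ "- \<lfloor>t - c\<rfloor>"]) auto
qed

lemma per_Ico_iff:
  assumes "0 \<le> y" "y \<le> 1"
  shows "t \<in> per {c..<c+y} \<longleftrightarrow> frac (t - c) < y"
proof
  assume "t \<in> per {c..<c+y}"
  then obtain k::int where k: "c \<le> t + k" "t + k < c + y" by (auto simp: per_def)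
  have "frac (t - c) = frac ((t + k - c) + of_int (-k))" by simp
  also have "\<dots> = t + k - c" using k assms by (simp only: frac_add_of_int_right frac_eq) simp
  finally show "frac (t - c) < y" using k by simp
next
  assume h: "frac (t - c) < y"
  have "t + of_int (- \<lfloor>t - c\<rfloor>) = c + frac (t - c)" by (simp add: frac_def)
  then show "t \<in> per {c..<c+y}" unfolding per_def using h frac_ge_0[of "t-c"]
    by (intro CollectI exI[of _ "- \<lfloor>t - c\<rfloor>"]) auto
qed

lemma frac_neg: "-1 \<le> z \<Longrightarrow> z < 0 \<Longrightarrow> frac z = z + 1"
  using frac_eq[of "z + 1"] frac_add_of_int_right[of z 1] by simp

lemma frac_diff_split:
  assumes "0 \<le> t" "t < 1"
  shows "frac (t - c) = (if frac c \<le> t then t - frac c else t - frac c + 1)"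
proof -
  have "t - c = (t - frac c) + of_int (- \<lfloor>c\<rfloor>)" by (simp add: frac_def)
  then have "frac (t - c) = frac (t - frac c)" by (simp only: frac_add_of_int_right)
  moreover have "frac c \<le> t \<Longrightarrow> frac (t - frac c) = t - frac c"
    using assms frac_ge_0[of c] by (subst frac_eq) linarith
  moreover have "\<not> frac c \<le> t \<Longrightarrow> frac (t - frac c) = t - frac c + 1"
    using assms frac_lt_1[of c] frac_ge_0[of c] by (intro frac_neg) auto
  ultimately show ?thesis by auto
qed

lemma per_full_arc: "per {c..c+1} = UNIV"
  using per_Icc_iff[of 1 _ c] less_imp_le[OF frac_lt_1] by auto

lemma leb_UNIV: "leb UNIV = 1"
proof -
  have "per UNIV = UNIV" by (auto simp: per_def)
  then show ?thesis unfolding leb_def using measure_lborel_Ico[of 0 "1::real"] by simp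
qed

text \<open>An arc of length \<open>y \<le> 1\<close> has Lebesgue measure \<open>y\<close>: modulo one it is either one interval of
  the fundamental domain or two pieces at its ends.\<close>

lemma leb_Icc:
  assumes "0 \<le> y" "y \<le> 1"
  shows "leb {c..c+y} = y"
proof (cases "y = 1")
  case True
  then show ?thesis using leb_per[of "{c..c+1}"] by (simp only: per_full_arc leb_UNIV)
next
  case False
  define f where "f = frac c"
  have f: "0 \<le> f" "f < 1" unfolding f_def by (auto simp: frac_lt_1)
  have S: "per {c..c+y} \<inter> {0..<1} = {t. 0 \<le> t \<and> t < 1 \<and>
      (if f \<le> t then t - f else t - f + 1) \<le> y}"
  proof (rule set_eqI)
    fix t
    show "t \<in> per {c..c+y} \<inter> {0..<1} \<longleftrightarrow> t \<in> {t. 0 \<le> t \<and> t < 1 \<and>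
      (if f \<le> t then t - f else t - f + 1) \<le> y}"
      using per_Icc_iff[OF assms, of t c] frac_diff_split[of t c] unfolding f_def by auto
  qed
  show ?thesis
  proof (cases "f + y < 1")
    case True
    have "per {c..c+y} \<inter> {0..<1} = {f..f+y}" unfolding S using True f assms by auto
    then show ?thesis unfolding leb_def using assms by simp
  next
    case False
    have "per {c..c+y} \<inter> {0..<1} = {f..<1} \<union> {0..f+y-1}"
      unfolding S using False f assms \<open>y \<noteq> 1\<close> by auto
    moreover have "measure lborel ({f..<1} \<union> {0..f+y-1}) = (1 - f) + (f + y - 1)"
      using False f assms \<open>y \<noteq> 1\<close> by (subst measure_Union) auto
    ultimately show ?thesis unfolding leb_def by simp
  qed
qed

lemma leb_point: "leb {c} = 0"
  using leb_Icc[of 0 c] by simp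

lemma leb_Ico:
  assumes "0 \<le> y" "y \<le> 1"
  shows "leb {c..<c+y} = y"
proof -
  have "leb {c..<c+y} \<le> leb {c..c+y}" by (rule leb_mono, rule per_mono) auto
  moreover have "{c..c+y} = {c..<c+y} \<union> {c+y}" using assms by auto
  then have "leb {c..c+y} \<le> leb {c..<c+y} + leb {c+y}"
    using leb_Un[of "{c..<c+y}" "{c+y}"] by simp
  ultimately show ?thesis using leb_Icc[OF assms] leb_point by simp
qed

lemma leb_Icc_le: "a \<le> b \<Longrightarrow> leb {a..b} \<le> b - a"
  using leb_Icc[of "b-a" a] leb_le1[of "{a..b}"] by (cases "b - a \<le> 1") auto

definition arc_overlap :: "real \<Rightarrow> real \<Rightarrow> real \<Rightarrow> real \<Rightarrow> real" where
  "arc_overlap a b p q = leb (per {a..b} \<inter> per {p..q})"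

text \<open>Moving the endpoints of two arcs changes their intersection only inside the four arcs swept by
  the endpoints; hence the overlap is 1-Lipschitz in each endpoint.\<close>

lemma per_diff_Icc:
  "per {a..b} - per {a'..b'} \<subseteq> per {min a a'..max a a'} \<union> per {min b b'..max b b'}"
proof
  fix t assume t: "t \<in> per {a..b} - per {a'..b'}"
  then obtain k::int where k: "a \<le> t + k" "t + k \<le> b" by (auto simp: per_def)
  have "\<not> (a' \<le> t + k \<and> t + k \<le> b')" using t by (auto simp: per_def)
  then have "(min a a' \<le> t + k \<and> t + k \<le> max a a') \<or> (min b b' \<le> t + k \<and> t + k \<le> max b b')"
    using k by linarith
  then show "t \<in> per {min a a'..max a a'} \<union> per {min b b'..max b b'}"
    unfolding per_def by auto
qed

lemma arc_overlap_le:
  "arc_overlap a b p q \<le> arc_overlap a' b' p' q'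
     + \<bar>a - a'\<bar> + \<bar>b - b'\<bar> + \<bar>p - p'\<bar> + \<bar>q - q'\<bar>"
proof -
  let ?E = "\<lambda>u v. per {min u v..max u v}"
  let ?I = "per {a'..b'} \<inter> per {p'..q'}"
  have swept: "leb (?E u v) \<le> \<bar>u - v\<bar>" for u v
    using leb_Icc_le[of "min u v" "max u v"] by (auto simp: min_def max_def)
  have B: "per X \<in> sets borel" if "X \<in> sets borel" for X using that by (rule borel_per)
  have "per {a..b} \<inter> per {p..q} \<subseteq> ?I \<union> ?E a a' \<union> ?E b b' \<union> ?E p p' \<union> ?E q q'"
    using per_diff_Icc[of a b a' b'] per_diff_Icc[of p q p' q'] by blast
  then have "arc_overlap a b p q \<le> leb (?I \<union> ?E a a' \<union> ?E b b' \<union> ?E p p' \<union> ?E q q')"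
    unfolding arc_overlap_def by (intro leb_mono per_mono) (auto intro!: B sets.Un sets.Int)
  also have "\<dots> \<le> arc_overlap a' b' p' q' + \<bar>a - a'\<bar> + \<bar>b - b'\<bar> + \<bar>p - p'\<bar> + \<bar>q - q'\<bar>"
    unfolding arc_overlap_def
    by (intro leb_Un_le swept order_refl sets.Int sets.Un B) auto
  finally show ?thesis .
qed

lemma arc_overlap_lipschitz:
  "\<bar>arc_overlap a b p q - arc_overlap a' b' p' q'\<bar>
     \<le> \<bar>a - a'\<bar> + \<bar>b - b'\<bar> + \<bar>p - p'\<bar> + \<bar>q - q'\<bar>"
  using arc_overlap_le[of a b p q a' b' p' q'] arc_overlap_le[of a' b' p' q' a b p q]
  unfolding abs_le_iff by (simp add: abs_minus_commute)

lemma arc_overlap_tendsto: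
  assumes "(a \<longlongrightarrow> a0) F" "(b \<longlongrightarrow> b0) F" "(p \<longlongrightarrow> p0) F" "(q \<longlongrightarrow> q0) F"
  shows "((\<lambda>j. arc_overlap (a j) (b j) (p j) (q j)) \<longlongrightarrow> arc_overlap a0 b0 p0 q0) F"
proof -
  have "((\<lambda>j. \<bar>a j - a0\<bar> + \<bar>b j - b0\<bar> + \<bar>p j - p0\<bar> + \<bar>q j - q0\<bar>) \<longlongrightarrow> 0) F"
    using LIM_zero[OF assms(1)] LIM_zero[OF assms(2)] LIM_zero[OF assms(3)] LIM_zero[OF assms(4)]
    by (auto intro!: tendsto_add_zero tendsto_rabs_zero)
  then have "((\<lambda>j. arc_overlap (a j) (b j) (p j) (q j) - arc_overlap a0 b0 p0 q0) \<longlongrightarrow> 0) F"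
    by (rule Lim_null_comparison[rotated]) (auto intro!: always_eventually arc_overlap_lipschitz)
  then show ?thesis by (rule LIM_zero_cancel)
qed

lemma arc_overlap_full: "arc_overlap a b 0 1 = leb {a..b}"
  using per_full_arc[of 0] by (simp add: arc_overlap_def)

lemma arc_overlap_Ico:
  assumes "a \<le> b"
  shows "leb (per {a..<b} \<inter> per {p..q}) = arc_overlap a b p q"
proof -
  have "leb (per {a..<b} \<inter> per {p..q}) \<le> arc_overlap a b p q" unfolding arc_overlap_def
    by (intro leb_mono per_mono) (auto simp: per_def intro!: borel_per)
  moreover have "per {a..b} \<inter> per {p..q} \<subseteq> (per {a..<b} \<inter> per {p..q}) \<union> per {b}"
    unfolding per_def by auto (metis order.order_iff_strict)
  then have "arc_overlap a b p q \<le> leb (per {a..<b} \<inter> per {p..q}) + leb (per {b})"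
    unfolding arc_overlap_def
    by (intro order.trans[OF leb_mono[OF per_mono] leb_Un]) (auto intro!: borel_per sets.Un sets.Int)
  ultimately show ?thesis using leb_point[of b] by simp
qed

lemma arc_overlap_Ioc:
  assumes "a \<le> b"
  shows "leb (per {a<..b} \<inter> per {p..q}) = arc_overlap a b p q"
proof -
  have "per {a<..b} \<subseteq> per {a..b}" by (rule per_mono) auto
  then have "leb (per {a<..b} \<inter> per {p..q}) \<le> arc_overlap a b p q" unfolding arc_overlap_def
    by (intro leb_mono per_mono) (auto intro!: borel_per)
  moreover have "per {a..b} \<inter> per {p..q} \<subseteq> (per {a<..b} \<inter> per {p..q}) \<union> per {a}"
    unfolding per_def by auto (metis order.order_iff_strict)
  then have "arc_overlap a b p q \<le> leb (per {a<..b} \<inter> per {p..q}) + leb (per {a})"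
    unfolding arc_overlap_def
    by (intro order.trans[OF leb_mono[OF per_mono] leb_Un]) (auto intro!: borel_per sets.Un sets.Int)
  ultimately show ?thesis using leb_point[of a] by simp
qed

lemma per_reflect: "s \<in> per ((\<lambda>y. 1 - y) ` A) \<longleftrightarrow> 1 - s \<in> per A"
proof
  assume "s \<in> per ((\<lambda>y. 1 - y) ` A)"
  then obtain k :: int where "s + of_int k \<in> (\<lambda>y. 1 - y) ` A" by (auto simp: per_def)
  then obtain y where "y \<in> A" "s + of_int k = 1 - y" by auto
  then have "1 - s + of_int (-k) = y" by simp
  with \<open>y \<in> A\<close> have "1 - s + of_int (-k) \<in> A" by simp
  then show "1 - s \<in> per A" unfolding per_def by blast
next
  assume "1 - s \<in> per A"
  then obtain k :: int where "1 - s + of_int k \<in> A" by (auto simp: per_def)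
  then have "s + of_int (-k) \<in> (\<lambda>y. 1 - y) ` A"
    by (auto intro!: image_eqI[of _ _ "1 - s + of_int k"])
  then show "s \<in> per ((\<lambda>y. 1 - y) ` A)" unfolding per_def by blast
qed

lemma reflect_Icc: "(\<lambda>y. 1 - y) ` {a..b} = {1-b..1-a::real}"
  by (auto intro!: image_eqI[of _ _ "1 - x" for x])

lemma reflect_Ico: "(\<lambda>y. 1 - y) ` {a..<b} = {1-b<..1-a::real}"
  by (auto intro!: image_eqI[of _ _ "1 - x" for x])

lemma translate_Icc: "(\<lambda>y. y + c) ` {a..b} = {a+c..b+c::real}"
  by (auto intro!: image_eqI[of _ _ "x - c" for x])

lemma translate_Ico: "(\<lambda>y. y + c) ` {a..<b} = {a+c..<b+c::real}"
  by (auto intro!: image_eqI[of _ _ "x - c" for x])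

lemma reflect_borel: "A \<in> sets borel \<Longrightarrow> (\<lambda>y::real. 1 - y) ` A \<in> sets borel"
proof -
  assume A: "A \<in> sets borel"
  have "(\<lambda>y::real. 1 - y) ` A = (\<lambda>y. 1 - y) -` A" by (auto intro!: image_eqI[of _ _ "1 - x" for x])
  then show ?thesis using measurable_sets_borel[OF _ A, of "\<lambda>y::real. 1 - y"] by auto
qed

lemma translate_borel: "A \<in> sets borel \<Longrightarrow> (\<lambda>y::real. y + c) ` A \<in> sets borel"
proof -
  assume A: "A \<in> sets borel"
  have "(\<lambda>y::real. y + c) ` A = (\<lambda>y. y - c) -` A" by (auto intro!: image_eqI[of _ _ "x - c" for x])
  then show ?thesis using measurable_sets_borel[OF _ A, of "\<lambda>y::real. y - c"] by auto
qed

lemma dirac_bounds: "0 \<le> dirac y A" "dirac y A \<le> 1"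
  by (auto simp: dirac_def)

lemma dirac_Un: "dirac y (A \<union> B) \<le> dirac y A + dirac y B"
  by (auto simp: dirac_def per_Un)

lemma dirac_shift_int: "dirac (y + of_int k) A = dirac y A"
  by (simp add: dirac_def per_shift_int)

lemma dirac_reflect: "dirac y ((\<lambda>t. 1 - t) ` A) = dirac (1 - y) A"
  by (simp add: dirac_def per_reflect)

lemma mu0_left_bounds:
  assumes "psi u \<noteq> phi u"
  shows "0 \<le> mu0_left psi phi u A" "mu0_left psi phi u A \<le> 1"
proof -
  let ?J = "{min (psi u) (phi u)..max (psi u) (phi u)}"
  have "leb (per A \<inter> per ?J) \<le> leb ?J"
    by (rule leb_mono) (use per_mono[of "per A \<inter> per ?J" "per ?J"] in auto)
  also have "\<dots> \<le> \<bar>phi u - psi u\<bar>"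
    using leb_Icc_le[of "min (psi u) (phi u)" "max (psi u) (phi u)"] by (auto simp: min_def max_def)
  finally show "0 \<le> mu0_left psi phi u A" "mu0_left psi phi u A \<le> 1"
    using assms by (auto simp: mu0_left_def leb_nonneg)
qed

lemma mu0_left_Un:
  assumes "psi u \<noteq> phi u" "A \<in> sets borel" "B \<in> sets borel"
  shows "mu0_left psi phi u (A \<union> B) \<le> mu0_left psi phi u A + mu0_left psi phi u B"
proof -
  let ?J = "{min (psi u) (phi u)..max (psi u) (phi u)}"
  have "per (A \<union> B) \<inter> per ?J = (per A \<inter> per ?J) \<union> (per B \<inter> per ?J)" by (auto simp: per_Un)
  moreover have "leb ((per A \<inter> per ?J) \<union> (per B \<inter> per ?J)) \<le> leb (per A \<inter> per ?J) + leb (per B \<inter> per ?J)"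
    using assms by (intro leb_Un) (auto intro!: borel_per)
  ultimately show ?thesis using assms
    by (simp add: mu0_left_def add_divide_distrib[symmetric] divide_right_mono)
qed

definition concentrated_on :: "real set \<Rightarrow> (real set \<Rightarrow> real) \<Rightarrow> bool" where
  "concentrated_on T v \<longleftrightarrow> (\<forall>A. T \<subseteq> per A \<longrightarrow> v A = 1) \<and> (\<forall>A. T \<inter> per A = {} \<longrightarrow> v A = 0)"

lemma dirac_concentrated: "concentrated_on {y + of_int k} (dirac y)"
  by (simp add: concentrated_on_def dirac_def per_shift_int)

lemma mu0_left_concentrated:
  assumes "psi u \<noteq> phi u" "\<bar>phi u - psi u\<bar> \<le> 1"
  shows "concentrated_on {min (psi u) (phi u)..max (psi u) (phi u)} (mu0_left psi phi u)"
  unfolding concentrated_on_def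
proof (intro conjI allI impI)
  let ?lo = "min (psi u) (phi u)" and ?hi = "max (psi u) (phi u)"
  have len: "?hi - ?lo = \<bar>phi u - psi u\<bar>" by (auto simp: min_def max_def)
  fix A
  show "mu0_left psi phi u A = 1" if "{?lo..?hi} \<subseteq> per A"
  proof -
    have "per A \<inter> per {?lo..?hi} = per {?lo..?hi}" using per_mono[OF that] by auto
    moreover have "leb {?lo..?lo + (?hi - ?lo)} = ?hi - ?lo"
      by (rule leb_Icc) (use assms(2) len in auto)
    ultimately have "leb (per A \<inter> per {?lo..?hi}) = ?hi - ?lo" by simp
    then show ?thesis using assms(1) len by (simp add: mu0_left_def)
  qed
  show "mu0_left psi phi u A = 0" if "{?lo..?hi} \<inter> per A = {}"
  proof -
    have "per A \<inter> per {?lo..?hi} = {}"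
    proof (rule equals0I)
      fix t assume "t \<in> per A \<inter> per {?lo..?hi}"
      then obtain k :: int where "t \<in> per A" "t + of_int k \<in> {?lo..?hi}" by (auto simp: per_def)
      then show False using that per_shift_int[of t k A] by blast
    qed
    then show ?thesis by (simp add: mu0_left_def leb_empty)
  qed
qed

lemma concentrated_reflect:
  "concentrated_on T v \<Longrightarrow> concentrated_on ((\<lambda>s. 1 - s) ` T) (\<lambda>A. v ((\<lambda>y. 1 - y) ` A))"
proof -
  have "T \<subseteq> per ((\<lambda>y. 1 - y) ` A)" if "(\<lambda>s. 1 - s) ` T \<subseteq> per A" for A
  proof
    fix s assume "s \<in> T"
    then show "s \<in> per ((\<lambda>y. 1 - y) ` A)" using that per_reflect[of s A] by blast
  qed
  moreover have "T \<inter> per ((\<lambda>y. 1 - y) ` A) = {}" if "(\<lambda>s. 1 - s) ` T \<inter> per A = {}" for A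
  proof (rule equals0I)
    fix s assume "s \<in> T \<inter> per ((\<lambda>y. 1 - y) ` A)"
    then show False using that per_reflect[of s A] by blast
  qed
  ultimately show "concentrated_on T v \<Longrightarrow> ?thesis" unfolding concentrated_on_def by blast
qed

lemma tendsto_cover:
  assumes "(f \<longlongrightarrow> L) (inf F (principal A))" "(f \<longlongrightarrow> L) (inf F (principal B))"
    and "eventually (\<lambda>x. x \<in> A \<union> B) F"
  shows "(f \<longlongrightarrow> L) F"
proof -
  have "F = inf F (principal (A \<union> B))"
    using assms(3) by (simp add: inf_absorb1 le_principal)
  also have "\<dots> = sup (inf F (principal A)) (inf F (principal B))"
    by (simp flip: sup_principal add: inf_sup_distrib1)
  finally show ?thesis using filterlim_sup[OF assms(1,2)] by simp
qed

lemma inf_principal_avoided: "eventually (\<lambda>x. x \<notin> A) F \<Longrightarrow> inf F (principal A) = bot"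
  unfolding eventually_False[symmetric] eventually_inf_principal by simp

lemma liminf_limsup_between:
  fixes f :: "nat \<Rightarrow> real"
  assumes lower: "\<And>e. e > 0 \<Longrightarrow> eventually (\<lambda>j. f j > L - e) sequentially"
    and upper: "\<And>e. e > 0 \<Longrightarrow> eventually (\<lambda>j. f j < U + e) sequentially"
  shows "ereal L \<le> liminf (\<lambda>j. ereal (f j))
    \<and> liminf (\<lambda>j. ereal (f j)) \<le> limsup (\<lambda>j. ereal (f j))
    \<and> limsup (\<lambda>j. ereal (f j)) \<le> ereal U"
proof (intro conjI)
  show "ereal L \<le> liminf (\<lambda>j. ereal (f j))"
    unfolding le_Liminf_iff
  proof (intro allI impI)
    fix z :: ereal assume "z < ereal L"
    then show "eventually (\<lambda>j. z < ereal (f j)) sequentially"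
      using lower[of "L - real_of_ereal z"] by (cases z) (auto elim: eventually_mono)
  qed
  show "limsup (\<lambda>j. ereal (f j)) \<le> ereal U"
    unfolding Limsup_le_iff
  proof (intro allI impI)
    fix z :: ereal assume "z > ereal U"
    then show "eventually (\<lambda>j. ereal (f j) < z) sequentially"
      using upper[of "real_of_ereal z - U"] by (cases z) (auto elim: eventually_mono)
  qed
qed (simp add: Liminf_le_Limsup)

lemma tdist_sequential_continuity:
  fixes G :: "real \<Rightarrow> real \<Rightarrow> real"
  assumes seq: "\<And>xs ys. (\<lambda>j. tdist (xs j) x0) \<longlonglongrightarrow> 0 \<Longrightarrow> ys \<longlonglongrightarrow> y0 \<Longrightarrow> (\<forall>j. ys j \<in> S)
      \<Longrightarrow> (\<lambda>j. G (xs j) (ys j)) \<longlonglongrightarrow> L"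
  shows "\<forall>e>0. \<exists>d>0. \<forall>x y. y \<in> S \<and> tdist x x0 < d \<and> \<bar>y - y0\<bar> < d \<longrightarrow> \<bar>G x y - L\<bar> < e"
proof (rule ccontr)
  assume "\<not> ?thesis"
  then obtain e where e: "e > 0" and bad: "\<And>d. d > 0 \<Longrightarrow> \<exists>x y. y \<in> S \<and> tdist x x0 < d
      \<and> \<bar>y - y0\<bar> < d \<and> \<not> \<bar>G x y - L\<bar> < e" by blast
  have "\<exists>xs ys. \<forall>j. ys j \<in> S \<and> tdist (xs j) x0 < inverse (real (Suc j))
      \<and> \<bar>ys j - y0\<bar> < inverse (real (Suc j)) \<and> \<not> \<bar>G (xs j) (ys j) - L\<bar> < e"
    using bad[of "inverse (real (Suc _))"] by (subst choice_iff[symmetric])+ simp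
  then obtain xs ys where xy: "\<And>j. ys j \<in> S \<and> tdist (xs j) x0 < inverse (real (Suc j))
      \<and> \<bar>ys j - y0\<bar> < inverse (real (Suc j)) \<and> \<not> \<bar>G (xs j) (ys j) - L\<bar> < e" by blast
  have "(\<lambda>j. tdist (xs j) x0) \<longlonglongrightarrow> 0"
    by (rule Lim_null_comparison[OF _ LIMSEQ_inverse_real_of_nat])
      (use xy in \<open>auto intro!: always_eventually simp: tdist_def less_imp_le\<close>)
  moreover have "(\<lambda>j. ys j - y0) \<longlonglongrightarrow> 0"
    by (rule Lim_null_comparison[OF _ LIMSEQ_inverse_real_of_nat])
      (use xy in \<open>auto intro!: always_eventually simp: less_imp_le\<close>)
  then have "ys \<longlonglongrightarrow> y0" by (rule LIM_zero_cancel)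
  ultimately have "(\<lambda>j. G (xs j) (ys j)) \<longlonglongrightarrow> L" using seq xy by blast
  from tendstoD[OF this e] obtain N where "\<And>j. j \<ge> N \<Longrightarrow> \<bar>G (xs j) (ys j) - L\<bar> < e"
    by (auto simp: dist_real_def eventually_sequentially)
  then show False using xy[of N] by blast
qed

lemma summable_weighted:
  fixes w g :: "nat \<Rightarrow> real"
  assumes "summable w" "\<And>n. 0 \<le> w n" "\<And>n. \<bar>g n\<bar> \<le> 1"
  shows "summable (\<lambda>n. w n * g n)"
  by (rule summable_comparison_test[OF _ assms(1)])
    (use assms(2,3) in \<open>auto simp: abs_mult intro!: mult_left_le\<close>)

lemma weighted_series_ge:
  fixes w g :: "nat \<Rightarrow> real"
  assumes w: "summable w" "\<And>n. 0 \<le> w n" and g: "\<And>n. \<bar>g n\<bar> \<le> 1"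
  shows "- (\<Sum>n. w n) \<le> (\<Sum>n. w n * g n)"
proof -
  have "(\<Sum>n. - w n) \<le> (\<Sum>n. w n * g n)"
  proof (rule suminf_le)
    show "- w n \<le> w n * g n" for n
      using mult_left_mono[of "-1" "g n" "w n"] g[of n] w(2)[of n] by (simp add: abs_le_iff)
  qed (use summable_minus[OF w(1)] summable_weighted[OF w g] in auto)
  then show ?thesis using suminf_minus[OF w(1)] by simp
qed

text \<open>The finitely many leading terms are handled
  together, the tail is uniformly small.\<close>

lemma weighted_series_lower:
  fixes w :: "nat \<Rightarrow> real" and d :: "nat \<Rightarrow> 'a \<Rightarrow> real"
  assumes w: "summable w" "\<And>n. 0 \<le> w n" and bnd: "\<And>n j. \<bar>d n j\<bar> \<le> 1"
    and ev: "\<And>n e. e > 0 \<Longrightarrow> eventually (\<lambda>j. d n j > - e) F" and e: "e > 0"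
  shows "eventually (\<lambda>j. (\<Sum>n. w n * d n j) > - e) F"
proof -
  obtain N where N: "norm (\<Sum>i. w (i + N)) < e / 2"
    using suminf_exist_split[OF _ w(1), of "e/2"] e by auto
  define W where "W = suminf w"
  have W: "0 \<le> W" unfolding W_def using w by (rule suminf_nonneg)
  define \<delta> where "\<delta> = e / (2 * (W + 1))"
  have \<delta>: "\<delta> > 0" "\<delta> * W < e / 2"
    using W e by (auto simp: \<delta>_def field_simps)
  have "eventually (\<lambda>j. \<forall>n\<in>{..<N}. d n j > - \<delta>) F"
    using ev \<delta>(1) by (intro eventually_ball_finite) auto
  then show ?thesis
  proof eventually_elim
    case (elim j)
    have sum: "summable (\<lambda>n. w n * d n j)" by (rule summable_weighted[OF w bnd])
    have "\<forall>n<N. - \<delta> \<le> d n j" using elim by (meson lessThan_iff less_imp_le)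
    then have "(\<Sum>n<N. w n * (- \<delta>)) \<le> (\<Sum>n<N. w n * d n j)"
      using w(2) by (intro sum_mono mult_left_mono) auto
    then have "- \<delta> * (\<Sum>n<N. w n) \<le> (\<Sum>n<N. w n * d n j)"
      by (simp add: sum_distrib_left mult.commute)
    moreover have "(\<Sum>n<N. w n) \<le> W"
      unfolding W_def using w by (intro sum_le_suminf) auto
    then have "- \<delta> * W \<le> - \<delta> * (\<Sum>n<N. w n)"
      using \<delta>(1) by (intro mult_left_mono_neg) auto
    moreover have "- (\<Sum>i. w (i + N)) \<le> (\<Sum>i. w (i + N) * d (i + N) j)"
      using w bnd summable_ignore_initial_segment[OF w(1)] by (intro weighted_series_ge) auto
    moreover have "(\<Sum>n. w n * d n j) = (\<Sum>i. w (i + N) * d (i + N) j) + (\<Sum>n<N. w n * d n j)"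
      using suminf_split_initial_segment[OF sum, of N] by simp
    ultimately show ?case using N \<delta>(2) by (auto simp: abs_less_iff)
  qed
qed

lemma frac_diff_eventually_close:
  fixes c \<epsilon> :: "nat \<Rightarrow> real"
  assumes off: "frac (a - c0) \<noteq> 0" and c: "c \<longlonglongrightarrow> c0" and \<epsilon>: "\<epsilon> \<longlonglongrightarrow> 0" and \<eta>: "\<eta> > 0"
  shows "eventually (\<lambda>j. \<forall>s\<in>{a - \<epsilon> j..a + \<epsilon> j}. \<bar>frac (s - c j) - frac (a - c0)\<bar> < \<eta>) sequentially"
proof -
  define \<tau> where "\<tau> = frac (a - c0)"
  have \<tau>: "0 < \<tau>" "\<tau> < 1" using off frac_ge_0[of "a - c0"] frac_lt_1[of "a - c0"] by (auto simp: \<tau>_def)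
  define \<kappa> where "\<kappa> = min (min \<tau> (1 - \<tau>)) \<eta>"
  have \<kappa>: "\<kappa> > 0" using \<tau> \<eta> by (simp add: \<kappa>_def)
  have "eventually (\<lambda>j. dist (c j) c0 < \<kappa> / 2 \<and> dist (\<epsilon> j) 0 < \<kappa> / 2) sequentially"
    using tendstoD[OF c, of "\<kappa>/2"] tendstoD[OF \<epsilon>, of "\<kappa>/2"] \<kappa> by (auto intro: eventually_conj)
  then show ?thesis
  proof eventually_elim
    case (elim j)
    show ?case
    proof
      fix s assume s: "s \<in> {a - \<epsilon> j..a + \<epsilon> j}"
      define \<theta> where "\<theta> = (s - a) - (c j - c0)"
      have \<theta>: "\<bar>\<theta>\<bar> < \<kappa>"
        using s elim abs_ge_self[of "c j - c0"] abs_ge_minus_self[of "c j - c0"]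
        by (auto simp: \<theta>_def dist_real_def abs_less_iff)
      have "s - c j = (\<tau> + \<theta>) + of_int \<lfloor>a - c0\<rfloor>" by (simp add: \<tau>_def \<theta>_def frac_def)
      then have "frac (s - c j) = frac (\<tau> + \<theta>)" by (simp only: frac_add_of_int_right)
      also have "\<dots> = \<tau> + \<theta>" using \<theta> by (subst frac_eq) (auto simp: \<kappa>_def abs_less_iff)
      finally show "\<bar>frac (s - c j) - frac (a - c0)\<bar> < \<eta>" using \<theta> by (simp add: \<tau>_def \<kappa>_def)
    qed
  qed
qed

text \<open>A short arc around \<open>a\<close> eventually lies inside, or outside, the arcs \<open>[c j, c j + y j]\<close>
  converging to \<open>[c0, c0 + y0]\<close>, according as \<open>a\<close> lies in \<open>[c0, c0 + y0)\<close> or not in \<open>[c0, c0 + y0]\<close>.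
  Only the left endpoint needs to be excluded explicitly: \<open>a\<close> at the right endpoint falls in neither
  case.\<close>

lemma shrinking_arc_decided:
  fixes c \<epsilon> y :: "nat \<Rightarrow> real"
  assumes off: "frac (a - c0) \<noteq> 0" and \<epsilon>: "\<epsilon> \<longlonglongrightarrow> 0" and c: "c \<longlonglongrightarrow> c0" and y: "y \<longlonglongrightarrow> y0"
    and yr: "\<And>j. y j \<in> {0..1}"
  shows "frac (a - c0) < y0 \<Longrightarrow>
      eventually (\<lambda>j. {a - \<epsilon> j..a + \<epsilon> j} \<subseteq> per {c j..c j + y j}) sequentially"
    and "y0 < frac (a - c0) \<Longrightarrow>
      eventually (\<lambda>j. {a - \<epsilon> j..a + \<epsilon> j} \<inter> per {c j..c j + y j} = {}) sequentially"
proof -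
  define \<tau> where "\<tau> = frac (a - c0)"
  have near: "eventually (\<lambda>j. (\<forall>s\<in>{a - \<epsilon> j..a + \<epsilon> j}. \<bar>frac (s - c j) - \<tau>\<bar> < \<bar>y0 - \<tau>\<bar> / 2)
      \<and> \<bar>y j - y0\<bar> < \<bar>y0 - \<tau>\<bar> / 2) sequentially" if "y0 \<noteq> \<tau>"
  proof -
    have gap: "\<bar>y0 - \<tau>\<bar> / 2 > 0" using that by simp
    from frac_diff_eventually_close[OF off c \<epsilon> gap] tendstoD[OF y gap]
    show ?thesis by eventually_elim (auto simp: \<tau>_def dist_real_def)
  qed
  show "eventually (\<lambda>j. {a - \<epsilon> j..a + \<epsilon> j} \<subseteq> per {c j..c j + y j}) sequentially"
    if lt: "frac (a - c0) < y0"
    using near[OF less_imp_neq[OF lt[folded \<tau>_def], symmetric]]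
  proof eventually_elim
    case (elim j)
    show ?case
    proof
      fix s assume "s \<in> {a - \<epsilon> j..a + \<epsilon> j}"
      then have "\<bar>frac (s - c j) - \<tau>\<bar> < \<bar>y0 - \<tau>\<bar> / 2" using elim by blast
      then have "frac (s - c j) \<le> y j" using elim[THEN conjunct2] lt
        by (simp add: \<tau>_def abs_less_iff abs_if split: if_splits)
      then show "s \<in> per {c j..c j + y j}" using per_Icc_iff yr[of j] by auto
    qed
  qed
  show "eventually (\<lambda>j. {a - \<epsilon> j..a + \<epsilon> j} \<inter> per {c j..c j + y j} = {}) sequentially"
    if gt: "y0 < frac (a - c0)"
    using near[OF less_imp_neq[OF gt[folded \<tau>_def]]]
  proof eventually_elim
    case (elim j)
    show ?case
    proof (rule equals0I)
      fix s assume s: "s \<in> {a - \<epsilon> j..a + \<epsilon> j} \<inter> per {c j..c j + y j}"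
      then have "\<bar>frac (s - c j) - \<tau>\<bar> < \<bar>y0 - \<tau>\<bar> / 2" using elim by blast
      then have "y j < frac (s - c j)" using elim[THEN conjunct2] gt
        by (simp add: \<tau>_def abs_less_iff abs_if split: if_splits)
      then show False using s per_Icc_iff yr[of j] by auto
    qed
  qed
qed

text \<open>Set functions concentrated on arcs shrinking to a point \<open>a\<close> behave, on arcs \<open>[c j, c j + y j]\<close>
  converging to \<open>[c0, c0 + y0]\<close> with \<open>a\<close> not congruent to \<open>c0\<close>, like the Dirac mass at \<open>a\<close>: their
  values are eventually above its mass on \<open>[c0, c0 + y0)\<close> and below its mass on \<open>[c0, c0 + y0]\<close>,
  up to any tolerance.\<close>

lemma concentrated_semicont:
  fixes v :: "nat \<Rightarrow> real set \<Rightarrow> real"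
  assumes conc: "eventually (\<lambda>j. concentrated_on (T j) (v j) \<and> T j \<subseteq> {a - \<epsilon> j..a + \<epsilon> j}) sequentially"
    and bounds: "\<And>j A. 0 \<le> v j A \<and> v j A \<le> 1"
    and \<epsilon>: "\<epsilon> \<longlonglongrightarrow> 0" and c: "c \<longlonglongrightarrow> c0" and y: "y \<longlonglongrightarrow> y0"
    and yr: "\<And>j. y j \<in> {0..1}" and y0: "y0 \<in> {0..1}"
    and off: "frac (a - c0) \<noteq> 0" and e: "e > 0"
  shows "eventually (\<lambda>j. v j {c j..c j + y j} > dirac a {c0..<c0+y0} - e) sequentially"
    and "eventually (\<lambda>j. v j {c j..c j + y j} < dirac a {c0..c0+y0} + e) sequentially"
proof -
  note decided = shrinking_arc_decided[OF off \<epsilon> c y yr]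
  show "eventually (\<lambda>j. v j {c j..c j + y j} > dirac a {c0..<c0+y0} - e) sequentially"
  proof (cases "a \<in> per {c0..<c0+y0}")
    case True
    then have "frac (a - c0) < y0" using per_Ico_iff[of y0 a c0] y0 by simp
    from conc decided(1)[OF this] show ?thesis
      by eventually_elim (use e in \<open>auto simp: concentrated_on_def dirac_def\<close>)
  next
    case False
    then show ?thesis using bounds e by (simp add: dirac_def less_le_trans[OF _ bounds[THEN conjunct1]])
  qed
  show "eventually (\<lambda>j. v j {c j..c j + y j} < dirac a {c0..c0+y0} + e) sequentially"
  proof (cases "a \<in> per {c0..c0+y0}")
    case False
    then have "y0 < frac (a - c0)" using per_Icc_iff[of y0 a c0] y0 by simp
    from conc decided(2)[OF this] show ?thesis
    proof eventually_elim
      case (elim j)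
      then have "T j \<inter> per {c j..c j + y j} = {}" by blast
      then show ?case using elim e False by (simp add: concentrated_on_def dirac_def)
    qed
  next
    case True
    then show ?thesis using bounds e by (simp add: dirac_def le_less_trans[OF bounds[THEN conjunct2]])
  qed
qed

section \<open>The measures \<open>mu^0\<close>\<close>

text \<open>The hypotheses of the corollary that the proof uses: continuity and periodicity of \<open>r\<close>, the
  orbit condition on the two atoms, and the shape of the window functions \<open>psi\<close>, \<open>phi\<close>.\<close>

locale fibre_measures =
  fixes \<alpha> :: real and r :: "real \<Rightarrow> real"
    and x1s y1s xb1 xb2 :: real and psi phi :: "real \<Rightarrow> real"
  assumes r_cont: "continuous_on UNIV r"
    and r_per: "\<And>x. r (x + 1) = r x"
    and orbit: "\<And>m::int. \<And>z. z \<in> {(x1s, y1s), (x1s + 1/2, 1 - y1s)} \<Longrightarrow>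
                  frac (snd (Spow \<alpha> r m z)) \<noteq> 0"
    and xb: "xb1 < x1s" "x1s < xb2" "0 < xb1" "xb2 < 1/2"
    and psi_cont: "continuous_on {xb1..xb2} psi"
    and phi_cont: "continuous_on {xb1..xb2} phi"
    and psi_range: "\<And>x. x \<in> {xb1..xb2} \<Longrightarrow> psi x \<in> {0..1}"
    and phi_range: "\<And>x. x \<in> {xb1..xb2} \<Longrightarrow> phi x \<in> {0..1}"
    and bd: "psi xb1 = 0" "phi xb1 = 1" "psi xb2 = 1" "phi xb2 = 0"
    and lt: "\<And>x. x \<in> {xb1..<x1s} \<Longrightarrow> psi x < phi x"
    and gt: "\<And>x. x \<in> {x1s<..xb2} \<Longrightarrow> psi x > phi x"
    and eq: "psi x1s = phi x1s" "frac (psi x1s) = frac y1s"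
begin

abbreviation "M0 \<equiv> mu0 xb1 xb2 x1s y1s psi phi"

lemma psi_ne_phi: "u \<in> {xb1..xb2} \<Longrightarrow> u \<noteq> x1s \<Longrightarrow> psi u \<noteq> phi u"
  using lt[of u] gt[of u] by (cases "u < x1s") auto

lemma window_length_le1: "u \<in> {xb1..xb2} \<Longrightarrow> \<bar>phi u - psi u\<bar> \<le> 1"
  using psi_range[of u] phi_range[of u] by auto

lemma psi_atom: "psi x1s = y1s + of_int (\<lfloor>psi x1s\<rfloor> - \<lfloor>y1s\<rfloor>)"
  using eq(2) by (simp add: frac_def)

lemma M0_bounds: "0 \<le> M0 x A \<and> M0 x A \<le> 1"
  unfolding mu0_def Let_def
  using dirac_bounds leb_nonneg leb_le1 mu0_left_bounds psi_ne_phi by auto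

lemma M0_periodic: "M0 (x + of_int k) A = M0 x A"
  unfolding mu0_def by (simp only: frac_add_of_int_right)

lemma M0_subadditive:
  assumes "A \<in> sets borel" "B \<in> sets borel"
  shows "M0 x (A \<union> B) \<le> M0 x A + M0 x B"
  unfolding mu0_def Let_def image_Un
  using dirac_Un leb_Un[OF assms] mu0_left_Un[OF _ assms]
    mu0_left_Un[OF _ reflect_borel[OF assms(1)] reflect_borel[OF assms(2)]] psi_ne_phi
  by auto

lemma M0_atom: "M0 x1s A = dirac y1s A"
  using xb by (simp add: mu0_def frac_eq)

lemma M0_left_window: "w \<in> {xb1<..<xb2} \<Longrightarrow> w \<noteq> x1s \<Longrightarrow> M0 w A = mu0_left psi phi w A"
  using xb by (simp add: mu0_def frac_eq)

lemma M0_reflect: "w \<in> {xb1<..<xb2} \<Longrightarrow> M0 (w + 1/2) A = M0 w ((\<lambda>y. 1 - y) ` A)"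
  using xb by (auto simp: mu0_def frac_eq dirac_reflect)

lemma M0_lebesgue:
  "0 \<le> w \<Longrightarrow> w < 1 \<Longrightarrow> w \<notin> {xb1<..<xb2} \<Longrightarrow> w - 1/2 \<notin> {xb1<..<xb2} \<Longrightarrow> M0 w A = leb A"
  using xb by (auto simp: mu0_def frac_eq)

subsection \<open>Concentration near the atoms\<close>

text \<open>Over the window, \<open>mu^0_w\<close> lives on the arc between \<open>psi w\<close> and \<open>phi w\<close>; as \<open>w\<close> tends to \<open>x1s\<close>
  this arc shrinks to the point \<open>psi x1s\<close>, a lift of \<open>y1s\<close>.\<close>

definition arc :: "real \<Rightarrow> real set" where
  "arc w = {min (psi w) (phi w)..max (psi w) (phi w)}"

definition spread :: "real \<Rightarrow> real" where
  "spread w = max \<bar>psi w - psi x1s\<bar> \<bar>phi w - psi x1s\<bar>"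

lemma M0_concentrated: "w \<in> {xb1<..<xb2} \<Longrightarrow> concentrated_on (arc w) (M0 w)"
proof (cases "w = x1s")
  case True
  then have "arc w = {y1s + of_int (\<lfloor>psi x1s\<rfloor> - \<lfloor>y1s\<rfloor>)}"
    using psi_atom eq(1) by (simp add: arc_def del: of_int_diff)
  moreover have "M0 w = dirac y1s" using True M0_atom by (simp add: fun_eq_iff)
  ultimately show ?thesis using dirac_concentrated[of y1s "\<lfloor>psi x1s\<rfloor> - \<lfloor>y1s\<rfloor>"] by simp
next
  case False
  assume w: "w \<in> {xb1<..<xb2}"
  then have "M0 w = mu0_left psi phi w" using False by (simp add: fun_eq_iff M0_left_window)
  moreover have "psi w \<noteq> phi w" "\<bar>phi w - psi w\<bar> \<le> 1"
    using w False psi_ne_phi[of w] window_length_le1[of w] by auto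
  ultimately show ?thesis unfolding arc_def using mu0_left_concentrated by simp
qed

lemma M0_concentrated_reflected:
  "w \<in> {xb1<..<xb2} \<Longrightarrow> concentrated_on ((\<lambda>s. 1 - s) ` arc w) (M0 (w + 1/2))"
proof -
  assume w: "w \<in> {xb1<..<xb2}"
  then have "M0 (w + 1/2) = (\<lambda>A. M0 w ((\<lambda>y. 1 - y) ` A))" by (simp add: fun_eq_iff M0_reflect)
  then show ?thesis using concentrated_reflect[OF M0_concentrated[OF w]] by simp
qed

lemma arc_near_atom: "arc w \<subseteq> {psi x1s - spread w..psi x1s + spread w}"
  by (auto simp: arc_def spread_def abs_le_iff min_def max_def split: if_splits)

lemma spread_tendsto:
  assumes w: "w \<longlonglongrightarrow> x1s"
  shows "(\<lambda>j. spread (w j)) \<longlonglongrightarrow> 0"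
proof -
  have x1s: "x1s \<in> {xb1..xb2}" using xb by auto
  have "eventually (\<lambda>j. w j \<in> {xb1<..<xb2}) sequentially"
    using xb by (intro topological_tendstoD[OF w]) auto
  then have inside: "eventually (\<lambda>j. w j \<in> {xb1..xb2}) sequentially"
    by eventually_elim auto
  have "(\<lambda>j. psi (w j)) \<longlonglongrightarrow> psi x1s" "(\<lambda>j. phi (w j)) \<longlonglongrightarrow> psi x1s"
    using continuous_on_tendsto_compose[OF psi_cont w x1s inside]
      continuous_on_tendsto_compose[OF phi_cont w x1s inside] eq(1) by auto
  then have "(\<lambda>j. spread (w j)) \<longlonglongrightarrow> max 0 0" unfolding spread_def
    by (intro tendsto_max tendsto_rabs_zero LIM_zero)
  then show ?thesis by simp
qed

lemma M0_atom_semicont: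
  assumes u: "u \<longlonglongrightarrow> x1s" and c: "c \<longlonglongrightarrow> c0" and y: "y \<longlonglongrightarrow> y0"
    and yr: "\<And>j. y j \<in> {0..1}" and y0: "y0 \<in> {0..1}"
    and off: "frac (y1s - c0) \<noteq> 0" and e: "e > 0"
  shows "eventually (\<lambda>j. M0 (u j) {c j..c j + y j} > M0 x1s {c0..<c0+y0} - e) sequentially"
    and "eventually (\<lambda>j. M0 (u j) {c j..c j + y j} < M0 x1s {c0..c0+y0} + e) sequentially"
proof -
  define k where "k = \<lfloor>psi x1s\<rfloor> - \<lfloor>y1s\<rfloor>"
  have a: "psi x1s = y1s + of_int k" using psi_atom by (simp add: k_def)
  have dirac: "M0 x1s A = dirac (psi x1s) A" for A by (simp add: a M0_atom dirac_shift_int)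
  have "psi x1s - c0 = (y1s - c0) + of_int k" using a by simp
  then have "frac (psi x1s - c0) = frac (y1s - c0)" by (simp only: frac_add_of_int_right)
  then have off': "frac (psi x1s - c0) \<noteq> 0" using off by simp
  have "eventually (\<lambda>j. u j \<in> {xb1<..<xb2}) sequentially"
    using xb by (intro topological_tendstoD[OF u]) auto
  then have conc: "eventually (\<lambda>j. concentrated_on (arc (u j)) (M0 (u j))
      \<and> arc (u j) \<subseteq> {psi x1s - spread (u j)..psi x1s + spread (u j)}) sequentially"
    by eventually_elim (simp add: M0_concentrated arc_near_atom)
  note semicont = concentrated_semicont[OF conc M0_bounds spread_tendsto[OF u] c y yr y0 off' e]
  show "eventually (\<lambda>j. M0 (u j) {c j..c j + y j} > M0 x1s {c0..<c0+y0} - e) sequentially"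
    using semicont(1) by (simp add: dirac)
  show "eventually (\<lambda>j. M0 (u j) {c j..c j + y j} < M0 x1s {c0..c0+y0} + e) sequentially"
    using semicont(2) by (simp add: dirac)
qed

lemma M0_mirror_atom_semicont:
  assumes u: "u \<longlonglongrightarrow> x1s + 1/2" and c: "c \<longlonglongrightarrow> c0" and y: "y \<longlonglongrightarrow> y0"
    and yr: "\<And>j. y j \<in> {0..1}" and y0: "y0 \<in> {0..1}"
    and off: "frac (1 - y1s - c0) \<noteq> 0" and e: "e > 0"
  shows "eventually (\<lambda>j. M0 (u j) {c j..c j + y j} > M0 (x1s + 1/2) {c0..<c0+y0} - e) sequentially"
    and "eventually (\<lambda>j. M0 (u j) {c j..c j + y j} < M0 (x1s + 1/2) {c0..c0+y0} + e) sequentially"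
proof -
  define k where "k = \<lfloor>psi x1s\<rfloor> - \<lfloor>y1s\<rfloor>"
  have a: "1 - psi x1s = (1 - y1s) + of_int (- k)" using psi_atom by (simp add: k_def)
  have dirac: "M0 (x1s + 1/2) A = dirac (1 - psi x1s) A" for A
    using M0_reflect[of x1s A] xb by (simp only: a dirac_shift_int) (simp add: M0_atom dirac_reflect)
  have "1 - psi x1s - c0 = (1 - y1s - c0) + of_int (- k)" using a by simp
  then have "frac (1 - psi x1s - c0) = frac (1 - y1s - c0)" by (simp only: frac_add_of_int_right)
  then have off': "frac (1 - psi x1s - c0) \<noteq> 0" using off by simp
  have w: "(\<lambda>j. u j - 1/2) \<longlonglongrightarrow> x1s" using tendsto_diff[OF u tendsto_const[of "1/2"]] by simp
  have "eventually (\<lambda>j. u j - 1/2 \<in> {xb1<..<xb2}) sequentially"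
    using xb by (intro topological_tendstoD[OF w]) auto
  then have conc: "eventually (\<lambda>j. concentrated_on ((\<lambda>s. 1 - s) ` arc (u j - 1/2)) (M0 (u j))
      \<and> (\<lambda>s. 1 - s) ` arc (u j - 1/2)
         \<subseteq> {(1 - psi x1s) - spread (u j - 1/2)..(1 - psi x1s) + spread (u j - 1/2)}) sequentially"
  proof eventually_elim
    case (elim j)
    then show ?case using M0_concentrated_reflected[OF elim] arc_near_atom[of "u j - 1/2"] by auto
  qed
  note semicont = concentrated_semicont[OF conc M0_bounds spread_tendsto[OF w] c y yr y0 off' e]
  show "eventually (\<lambda>j. M0 (u j) {c j..c j + y j} > M0 (x1s + 1/2) {c0..<c0+y0} - e) sequentially"
    using semicont(1) by (simp add: dirac)
  show "eventually (\<lambda>j. M0 (u j) {c j..c j + y j} < M0 (x1s + 1/2) {c0..c0+y0} + e) sequentially"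
    using semicont(2) by (simp add: dirac)
qed

subsection \<open>Continuity away from the atoms\<close>

text \<open>The mass that \<open>mu^0_w\<close>, for \<open>w\<close> in \<open>[0, 1/2)\<close> off the atom, gives to the arc \<open>[c, c + y]\<close>.
  At the ends of the window the arc between \<open>psi\<close> and \<open>phi\<close> is the whole circle, so the two
  branches agree there; this is what makes the mass continuous in \<open>(w, c, y)\<close>.\<close>

definition arc_mass :: "real \<Rightarrow> real \<Rightarrow> real \<Rightarrow> real" where
  "arc_mass w c y = (if xb1 < w \<and> w < xb2
     then arc_overlap c (c + y) (min (psi w) (phi w)) (max (psi w) (phi w)) / \<bar>phi w - psi w\<bar>
     else y)"

lemma arc_mass_closed_window:
  assumes "w \<in> {xb1..xb2}" "y \<in> {0..1}"
  shows "arc_mass w c y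
    = arc_overlap c (c + y) (min (psi w) (phi w)) (max (psi w) (phi w)) / \<bar>phi w - psi w\<bar>"
proof (cases "w = xb1 \<or> w = xb2")
  case True
  then have "min (psi w) (phi w) = 0" "max (psi w) (phi w) = 1" "\<bar>phi w - psi w\<bar> = 1"
    using bd by auto
  then show ?thesis using True xb assms(2) by (auto simp: arc_mass_def arc_overlap_full leb_Icc)
next
  case False
  then show ?thesis using assms(1) by (simp add: arc_mass_def)
qed

text \<open>Inside the closed window \<open>arc_mass\<close> is a continuous expression in the endpoints, as long as
  the denominator \<open>|phi w - psi w|\<close> stays away from zero, i.e. away from \<open>x1s\<close>.\<close>

lemma arc_mass_tendsto_in_window:
  assumes w: "(w \<longlongrightarrow> w0) F" and inside: "eventually (\<lambda>j. w j \<in> {xb1..xb2}) F"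
    and w0: "w0 \<in> {xb1..xb2}" "w0 \<noteq> x1s" and c: "(c \<longlongrightarrow> c0) F" and y: "(y \<longlongrightarrow> y0) F"
    and yr: "\<And>j. y j \<in> {0..1}" and y0: "y0 \<in> {0..1}"
  shows "((\<lambda>j. arc_mass (w j) (c j) (y j)) \<longlongrightarrow> arc_mass w0 c0 y0) F"
proof -
  have "((\<lambda>j. psi (w j)) \<longlongrightarrow> psi w0) F" "((\<lambda>j. phi (w j)) \<longlongrightarrow> phi w0) F"
    using continuous_on_tendsto_compose[OF psi_cont w w0(1) inside]
      continuous_on_tendsto_compose[OF phi_cont w w0(1) inside] by auto
  moreover have "\<bar>phi w0 - psi w0\<bar> \<noteq> 0" using psi_ne_phi[OF w0] by simp
  ultimately have "((\<lambda>j. arc_overlap (c j) (c j + y j) (min (psi (w j)) (phi (w j)))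
      (max (psi (w j)) (phi (w j))) / \<bar>phi (w j) - psi (w j)\<bar>) \<longlongrightarrow> arc_mass w0 c0 y0) F"
    unfolding arc_mass_closed_window[OF w0(1) y0]
    by (intro tendsto_divide arc_overlap_tendsto tendsto_add tendsto_min tendsto_max tendsto_rabs
        tendsto_diff c y)
  moreover from inside have "eventually (\<lambda>j. arc_overlap (c j) (c j + y j) (min (psi (w j)) (phi (w j)))
      (max (psi (w j)) (phi (w j))) / \<bar>phi (w j) - psi (w j)\<bar> = arc_mass (w j) (c j) (y j)) F"
  proof eventually_elim
    case (elim j)
    show ?case using arc_mass_closed_window[OF elim yr[of j]] by simp
  qed
  ultimately show ?thesis by (rule Lim_transform_eventually)
qed

text \<open>Continuity of \<open>arc_mass\<close> off \<open>x1s\<close>: split the indices into those inside the closed window,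
  handled above, and those outside the open window, where \<open>arc_mass\<close> is just the length.\<close>

lemma arc_mass_tendsto:
  assumes w: "w \<longlonglongrightarrow> w0" and w0: "w0 \<noteq> x1s" and c: "c \<longlonglongrightarrow> c0" and y: "y \<longlonglongrightarrow> y0"
    and yr: "\<And>j. y j \<in> {0..1}" and y0: "y0 \<in> {0..1}"
  shows "(\<lambda>j. arc_mass (w j) (c j) (y j)) \<longlonglongrightarrow> arc_mass w0 c0 y0"
proof (rule tendsto_cover)
  let ?W = "{j. w j \<in> {xb1..xb2}}" and ?L = "{j. w j \<notin> {xb1<..<xb2}}"
  have restrict: "(f \<longlongrightarrow> l) (inf sequentially (principal P))" if "f \<longlonglongrightarrow> l" for f :: "nat \<Rightarrow> real" and l P
    using that by (rule tendsto_mono[OF inf_le1])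
  show "eventually (\<lambda>j. j \<in> ?W \<union> ?L) sequentially" by (intro always_eventually) auto
  show "((\<lambda>j. arc_mass (w j) (c j) (y j)) \<longlongrightarrow> arc_mass w0 c0 y0) (inf sequentially (principal ?W))"
  proof (cases "w0 \<in> {xb1..xb2}")
    case True
    have "eventually (\<lambda>j. w j \<in> {xb1..xb2}) (inf sequentially (principal ?W))"
      by (simp add: eventually_inf_principal)
    then show ?thesis
      by (rule arc_mass_tendsto_in_window[OF restrict[OF w] _ True w0 restrict[OF c] restrict[OF y] yr y0])
  next
    case False
    then have "eventually (\<lambda>j. w j \<in> - {xb1..xb2}) sequentially"
      by (intro topological_tendstoD[OF w]) auto
    then have "inf sequentially (principal ?W) = bot"
      by (intro inf_principal_avoided) (auto elim: eventually_mono)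
    then show ?thesis by simp
  qed
  show "((\<lambda>j. arc_mass (w j) (c j) (y j)) \<longlongrightarrow> arc_mass w0 c0 y0) (inf sequentially (principal ?L))"
  proof (cases "w0 \<in> {xb1<..<xb2}")
    case True
    then have "eventually (\<lambda>j. w j \<in> {xb1<..<xb2}) sequentially"
      by (intro topological_tendstoD[OF w]) auto
    then have "inf sequentially (principal ?L) = bot"
      by (intro inf_principal_avoided) (auto elim: eventually_mono)
    then show ?thesis by simp
  next
    case False
    then have "arc_mass w0 c0 y0 = y0" by (auto simp: arc_mass_def)
    moreover have "eventually (\<lambda>j. y j = arc_mass (w j) (c j) (y j)) (inf sequentially (principal ?L))"
      by (auto simp: eventually_inf_principal arc_mass_def intro!: always_eventually)
    ultimately show ?thesis using restrict[OF y] by (auto intro: Lim_transform_eventually)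
  qed
qed

lemma M0_arc_left:
  assumes "0 \<le> w" "w < 1/2" "w \<noteq> x1s" "y \<in> {0..1}"
  shows "M0 w {c..c+y} = arc_mass w c y"
proof (cases "xb1 < w \<and> w < xb2")
  case True
  then show ?thesis using assms(3) M0_left_window[of w]
    by (simp add: arc_mass_def mu0_left_def arc_overlap_def Int_commute)
next
  case False
  then have "arc_mass w c y = y" by (auto simp: arc_mass_def)
  then show ?thesis using False assms xb M0_lebesgue[of w] leb_Icc[of y c] by simp
qed

lemma M0_arc_right:
  assumes "1/2 \<le> w" "w < 1" "w \<noteq> x1s + 1/2" "y \<in> {0..1}"
  shows "M0 w {c..c+y} = arc_mass (w - 1/2) (1 - (c + y)) y"
proof (cases "w - 1/2 \<in> {xb1<..<xb2}")
  case True
  have "M0 w {c..c+y} = M0 (w - 1/2) {1 - (c + y)..1 - (c + y) + y}"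
    using M0_reflect[OF True, of "{c..c+y}"] by (simp add: reflect_Icc)
  also have "\<dots> = arc_mass (w - 1/2) (1 - (c + y)) y"
    using assms by (intro M0_arc_left) auto
  finally show ?thesis .
next
  case False
  then have "arc_mass (w - 1/2) (1 - (c + y)) y = y" by (auto simp: arc_mass_def)
  then show ?thesis using False assms xb M0_lebesgue[of w] leb_Icc[of y c] by simp
qed

lemma M0_lebesgue_near_gaps:
  assumes g: "g \<in> {0, 1/2}" and u: "u \<longlonglongrightarrow> g"
  shows "eventually (\<lambda>j. \<forall>A. M0 (u j) A = leb A) sequentially"
proof -
  define \<eta> where "\<eta> = min xb1 (1/2 - xb2)"
  have \<eta>: "\<eta> > 0" "\<eta> \<le> xb1" "\<eta> \<le> 1/2 - xb2" using xb by (auto simp: \<eta>_def)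
  then have "eventually (\<lambda>j. u j \<in> {g - \<eta><..<g + \<eta>}) sequentially"
    by (intro topological_tendstoD[OF u]) auto
  then show ?thesis
  proof eventually_elim
    case (elim j)
    show ?case
    proof (cases "g = 0 \<and> u j < 0")
      case True
      then have "M0 (u j) A = M0 (u j + 1) A" for A using M0_periodic[of "u j" 1 A] by simp
      moreover have "M0 (u j + 1) A = leb A" for A
        using True elim xb \<eta> by (intro M0_lebesgue) auto
      ultimately show ?thesis by simp
    next
      case False
      then show ?thesis using g elim xb \<eta> by (auto intro!: M0_lebesgue)
    qed
  qed
qed

lemma M0_nonatomic_tendsto:
  assumes u: "u \<longlonglongrightarrow> u0" and u0: "0 \<le> u0" "u0 < 1" "u0 \<noteq> x1s" "u0 \<noteq> x1s + 1/2"
    and c: "c \<longlonglongrightarrow> c0" and y: "y \<longlonglongrightarrow> y0" and yr: "\<And>j. y j \<in> {0..1}" and y0: "y0 \<in> {0..1}"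
  shows "(\<lambda>j. M0 (u j) {c j..c j + y j}) \<longlonglongrightarrow> M0 u0 {c0..c0+y0}"
proof -
  consider "u0 \<in> {0, 1/2}" | "u0 \<in> {0<..<1/2}" | "u0 \<in> {1/2<..<1}" using u0 by fastforce
  then show ?thesis
  proof cases
    case 1
    then have "M0 u0 {c0..c0+y0} = y0" using xb y0 leb_Icc by (auto simp: M0_lebesgue)
    moreover from M0_lebesgue_near_gaps[OF 1 u]
    have "eventually (\<lambda>j. y j = M0 (u j) {c j..c j + y j}) sequentially"
      by eventually_elim (use yr leb_Icc in auto)
    ultimately show ?thesis using Lim_transform_eventually[OF y] by simp
  next
    case 2
    then have "eventually (\<lambda>j. u j \<in> {0<..<1/2} - {x1s}) sequentially"
      using u0 by (intro topological_tendstoD[OF u]) auto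
    then have "eventually (\<lambda>j. arc_mass (u j) (c j) (y j) = M0 (u j) {c j..c j + y j}) sequentially"
      by eventually_elim (use yr in \<open>simp add: M0_arc_left\<close>)
    moreover have "(\<lambda>j. arc_mass (u j) (c j) (y j)) \<longlonglongrightarrow> arc_mass u0 c0 y0"
      by (rule arc_mass_tendsto[OF u u0(3) c y yr y0])
    ultimately show ?thesis using 2 u0 y0 by (simp add: M0_arc_left Lim_transform_eventually)
  next
    case 3
    have w: "(\<lambda>j. u j - 1/2) \<longlonglongrightarrow> u0 - 1/2" by (intro tendsto_diff u tendsto_const)
    have "eventually (\<lambda>j. u j \<in> {1/2<..<1} - {x1s + 1/2}) sequentially"
      using 3 u0 by (intro topological_tendstoD[OF u]) auto
    then have "eventually (\<lambda>j. arc_mass (u j - 1/2) (1 - (c j + y j)) (y j)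
        = M0 (u j) {c j..c j + y j}) sequentially"
      by eventually_elim (use yr in \<open>simp add: M0_arc_right\<close>)
    moreover have "(\<lambda>j. arc_mass (u j - 1/2) (1 - (c j + y j)) (y j))
        \<longlonglongrightarrow> arc_mass (u0 - 1/2) (1 - (c0 + y0)) y0"
      using u0(4) by (intro arc_mass_tendsto[OF w] tendsto_intros c y yr y0) auto
    ultimately show ?thesis using 3 u0 y0 by (simp add: M0_arc_right Lim_transform_eventually)
  qed
qed

text \<open>Away from \<open>x1s\<close> and \<open>x1s + 1/2\<close> the measure \<open>mu^0_u\<close> has no atoms, so closing an arc does
  not change its mass.\<close>

lemma M0_nonatomic_Ico:
  assumes u0: "0 \<le> u0" "u0 < 1" "u0 \<noteq> x1s" "u0 \<noteq> x1s + 1/2" and y0: "y0 \<in> {0..1}"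
  shows "M0 u0 {c0..<c0+y0} = M0 u0 {c0..c0+y0}"
proof -
  consider "u0 \<in> {xb1<..<xb2}" | "u0 - 1/2 \<in> {xb1<..<xb2}"
    | "u0 \<notin> {xb1<..<xb2}" "u0 - 1/2 \<notin> {xb1<..<xb2}" by blast
  then show ?thesis
  proof cases
    case 1
    then show ?thesis using M0_left_window[of u0] u0 y0
      by (simp add: mu0_left_def arc_overlap_Ico arc_overlap_def)
  next
    case 2
    then have "M0 u0 A = M0 (u0 - 1/2) ((\<lambda>y. 1 - y) ` A)" for A using M0_reflect[of "u0 - 1/2"] by simp
    moreover have "u0 - 1/2 \<noteq> x1s" using u0 by auto
    ultimately show ?thesis using M0_left_window[of "u0 - 1/2"] 2 y0
      by (simp add: reflect_Icc reflect_Ico mu0_left_def arc_overlap_Ioc arc_overlap_def)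
  next
    case 3
    then show ?thesis using M0_lebesgue u0 y0 leb_Icc leb_Ico by auto
  qed
qed

lemma M0_semicont:
  assumes u: "u \<longlonglongrightarrow> u0" and c: "c \<longlonglongrightarrow> c0" and y: "y \<longlonglongrightarrow> y0"
    and yr: "\<And>j. y j \<in> {0..1}" and y0: "y0 \<in> {0..1}"
    and off1: "frac u0 = x1s \<Longrightarrow> frac (y1s - c0) \<noteq> 0"
    and off2: "frac u0 = x1s + 1/2 \<Longrightarrow> frac (1 - y1s - c0) \<noteq> 0" and e: "e > 0"
  shows "eventually (\<lambda>j. M0 (u j) {c j..c j + y j} > M0 u0 {c0..<c0+y0} - e) sequentially"
    and "eventually (\<lambda>j. M0 (u j) {c j..c j + y j} < M0 u0 {c0..c0+y0} + e) sequentially"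
proof -
  define v0 where "v0 = frac u0"
  define w where "w j = u j - of_int \<lfloor>u0\<rfloor>" for j
  have w: "w \<longlonglongrightarrow> v0" unfolding w_def v0_def frac_def by (intro tendsto_diff u tendsto_const)
  have Mw: "M0 (u j) A = M0 (w j) A" for j A using M0_periodic[of "w j" "\<lfloor>u0\<rfloor>" A] by (simp add: w_def)
  have Mv: "M0 u0 A = M0 v0 A" for A
    using M0_periodic[of v0 "\<lfloor>u0\<rfloor>" A] by (simp add: v0_def frac_def)
  have v0: "0 \<le> v0" "v0 < 1" by (auto simp: v0_def frac_lt_1)
  have "eventually (\<lambda>j. M0 (w j) {c j..c j + y j} > M0 v0 {c0..<c0+y0} - e) sequentially \<and>
        eventually (\<lambda>j. M0 (w j) {c j..c j + y j} < M0 v0 {c0..c0+y0} + e) sequentially"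
  proof (cases "v0 = x1s \<or> v0 = x1s + 1/2")
    case True
    then show ?thesis
      using M0_atom_semicont[OF _ c y yr y0 off1 e] M0_mirror_atom_semicont[OF _ c y yr y0 off2 e] w
      by (auto simp: v0_def)
  next
    case False
    have "(\<lambda>j. M0 (w j) {c j..c j + y j}) \<longlonglongrightarrow> M0 v0 {c0..c0+y0}"
      using False by (intro M0_nonatomic_tendsto[OF w v0 _ _ c y yr y0]) auto
    from tendstoD[OF this e]
    have "eventually (\<lambda>j. \<bar>M0 (w j) {c j..c j + y j} - M0 v0 {c0..c0+y0}\<bar> < e) sequentially"
      by (simp add: dist_real_def)
    moreover have "M0 v0 {c0..<c0+y0} = M0 v0 {c0..c0+y0}"
      using False by (intro M0_nonatomic_Ico[OF v0 _ _ y0]) auto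
    ultimately show ?thesis by (auto simp: abs_less_iff elim: eventually_mono)
  qed
  then show "eventually (\<lambda>j. M0 (u j) {c j..c j + y j} > M0 u0 {c0..<c0+y0} - e) sequentially"
    and "eventually (\<lambda>j. M0 (u j) {c j..c j + y j} < M0 u0 {c0..c0+y0} + e) sequentially"
    by (simp_all add: Mw Mv)
qed

section \<open>The measures \<open>mu^n\<close>\<close>

abbreviation "Mn \<equiv> mun \<alpha> r xb1 xb2 x1s y1s psi phi"
abbreviation "coc \<equiv> cocycle \<alpha> r"

lemma r_periodic: "r (x + of_int m) = r x"
proof -
  have nat: "r (x + of_nat n) = r x" for x n
    by (induction n arbitrary: x) (simp_all add: r_per add.assoc[symmetric])
  show ?thesis
  proof (cases "m \<ge> 0")
    case True
    then show ?thesis using nat[of x "nat m"] by simp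
  next
    case False
    then show ?thesis using nat[of "x + of_int m" "nat (- m)"] by simp
  qed
qed

lemma cocycle_periodic: "coc n (x + of_int m) = coc n x"
  unfolding cocycle_def
  by (intro sum.cong refl) (metis r_periodic add.commute add.left_commute)

lemma cocycle_tendsto: "x \<longlonglongrightarrow> x0 \<Longrightarrow> (\<lambda>j. coc n (x j)) \<longlonglongrightarrow> coc n x0"
  unfolding cocycle_def
  by (intro tendsto_intros continuous_on_tendsto_compose[OF r_cont]) auto

lemma Sinv_power: "(Sinv \<alpha> r ^^ n) (x, y) = (x - real n * \<alpha>, y - coc n (x - real n * \<alpha>))"
proof (induction n)
  case 0 then show ?case by (simp add: cocycle_def)
next
  case (Suc n)
  have "coc (Suc n) (x - real (Suc n) * \<alpha>) = r (x - real (Suc n) * \<alpha>) + coc n (x - real n * \<alpha>)"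
    unfolding cocycle_def sum.lessThan_Suc_shift by (simp add: algebra_simps)
  then show ?case using Suc by (simp add: Sinv_def algebra_simps)
qed

text \<open>The orbit hypothesis, read backwards along the orbit: if \<open>R^n x0\<close> is an atom, the atom, pulled
  back by the cocycle, is not at the left endpoint \<open>0\<close> of the arcs \<open>[0, y]\<close>.\<close>

lemma atom_off_endpoint:
  assumes "frac (x0 + real n * \<alpha>) = x1s + d" "(x1s + d, y') \<in> {(x1s, y1s), (x1s + 1/2, 1 - y1s)}"
  shows "frac (y' - coc n x0) \<noteq> 0"
proof -
  have "x0 = (x1s + d - real n * \<alpha>) + of_int \<lfloor>x0 + real n * \<alpha>\<rfloor>"
    using assms(1) by (simp add: frac_def)
  then have "coc n x0 = coc n (x1s + d - real n * \<alpha>)" by (metis cocycle_periodic)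
  moreover have "Spow \<alpha> r (- int n) (x1s + d, y') = (Sinv \<alpha> r ^^ n) (x1s + d, y')"
    by (cases "n = 0") (auto simp: Spow_def)
  ultimately show ?thesis using orbit[OF assms(2), of "- int n"] by (simp add: Sinv_power)
qed

lemma mun_arc: "Mn n x {0..y} = M0 (x + real n * \<alpha>) {coc n x..coc n x + y}"
  unfolding mun_def translate_Icc by (simp add: add.commute)

lemma mun_arc_open: "Mn n x {0..<y} = M0 (x + real n * \<alpha>) {coc n x..<coc n x + y}"
  unfolding mun_def translate_Ico by (simp add: add.commute)

lemma mun_periodic: "Mn n (x + of_int m) A = Mn n x A"
proof -
  have "M0 (x + of_int m + real n * \<alpha>) B = M0 (x + real n * \<alpha>) B" for B
    using M0_periodic[of "x + real n * \<alpha>" m B] by (simp add: algebra_simps)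
  then show ?thesis unfolding mun_def cocycle_periodic by simp
qed

lemma mun_bounds: "0 \<le> Mn n x A \<and> Mn n x A \<le> 1"
  unfolding mun_def using M0_bounds by auto

text \<open>Semicontinuity of \<open>mu^n\<close>: after choosing lifts \<open>x' j\<close> of \<open>xs j\<close> converging in the reals,
  the base point \<open>R^n x\<close> and the arc endpoint \<open>sigma^n(0)\<close> converge, and \<open>M0_semicont\<close> applies.\<close>

lemma mun_semicont:
  assumes xs: "(\<lambda>j. tdist (xs j) x0) \<longlonglongrightarrow> 0" and y: "ys \<longlonglongrightarrow> y0"
    and yr: "\<And>j. ys j \<in> {0..1}" and y0: "y0 \<in> {0..1}" and e: "e > 0"
  shows "eventually (\<lambda>j. Mn n (xs j) {0..ys j} > Mn n x0 {0..<y0} - e) sequentially"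
    and "eventually (\<lambda>j. Mn n (xs j) {0..ys j} < Mn n x0 {0..y0} + e) sequentially"
proof -
  define x' where "x' j = xs j - of_int (round (xs j - x0))" for j
  have "(\<lambda>j. x' j - x0) \<longlonglongrightarrow> 0"
    using xs unfolding tdist_def x'_def by (simp add: tendsto_rabs_zero_iff algebra_simps)
  then have x': "x' \<longlonglongrightarrow> x0" by (rule LIM_zero_cancel)
  have lift: "Mn n (xs j) A = Mn n (x' j) A" for j A
    using mun_periodic[of n "x' j" "round (xs j - x0)" A] by (simp add: x'_def)
  have u: "(\<lambda>j. x' j + real n * \<alpha>) \<longlonglongrightarrow> x0 + real n * \<alpha>" by (intro tendsto_intros x')
  have off1: "frac (x0 + real n * \<alpha>) = x1s \<Longrightarrow> frac (y1s - coc n x0) \<noteq> 0"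
    using atom_off_endpoint[of x0 n 0 y1s] by simp
  have off2: "frac (x0 + real n * \<alpha>) = x1s + 1/2 \<Longrightarrow> frac (1 - y1s - coc n x0) \<noteq> 0"
    using atom_off_endpoint[of x0 n "1/2" "1 - y1s"] by simp
  note M = M0_semicont[OF u cocycle_tendsto[OF x'] y yr y0 off1 off2 e]
  show "eventually (\<lambda>j. Mn n (xs j) {0..ys j} > Mn n x0 {0..<y0} - e) sequentially"
    using M(1) unfolding lift by (simp add: mun_arc mun_arc_open)
  show "eventually (\<lambda>j. Mn n (xs j) {0..ys j} < Mn n x0 {0..y0} + e) sequentially"
    using M(2) unfolding lift by (simp add: mun_arc)
qed

section \<open>The measures \<open>mu\<close>\<close>

abbreviation "Mu \<equiv> mu \<alpha> r xb1 xb2 x1s y1s psi phi"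

lemma summable_half_powers: "summable (\<lambda>n. (1/2::real) ^ (n + 1))"
  using summable_geometric[of "1/2::real"] by (simp add: summable_mult)

lemma summable_mun: "summable (\<lambda>n. (1/2) ^ (n + 1) * Mn n x A)"
  using mun_bounds by (intro summable_weighted summable_half_powers) auto

lemma mu_diff:
  "Mu x A - Mu x' B
     = ((leb A - leb B) + (\<Sum>n. (1/2) ^ (n + 1) * (Mn n x A - Mn n x' B))) / 2"
  unfolding mu_def using suminf_diff[OF summable_mun summable_mun, of x A x' B]
  by (simp add: right_diff_distrib field_simps)

lemma mu_semicont:
  assumes xs: "(\<lambda>j. tdist (xs j) x0) \<longlonglongrightarrow> 0" and y: "ys \<longlonglongrightarrow> y0"
    and yr: "\<And>j. ys j \<in> {0..1}" and y0: "y0 \<in> {0..1}" and e: "e > 0"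
  shows "eventually (\<lambda>j. Mu (xs j) {0..ys j} > Mu x0 {0..<y0} - e) sequentially"
    and "eventually (\<lambda>j. Mu (xs j) {0..ys j} < Mu x0 {0..y0} + e) sequentially"
proof -
  have leb: "leb {0..ys j} = ys j" "leb {0..y0} = y0" "leb {0..<y0} = y0" for j
    using leb_Icc[of "ys j" 0] leb_Icc[of y0 0] leb_Ico[of y0 0] yr[of j] y0 by auto
  have bnd: "\<bar>Mn n x A - Mn n x' B\<bar> \<le> 1" for n x A x' B
    using mun_bounds[of n x A] mun_bounds[of n x' B] by auto
  have ys: "eventually (\<lambda>j. \<bar>ys j - y0\<bar> < e) sequentially"
    using tendstoD[OF y e] by (simp add: dist_real_def)
  have low: "eventually (\<lambda>j. Mn n (xs j) {0..ys j} - Mn n x0 {0..<y0} > - e') sequentially"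
    if "e' > 0" for n e'
    using mun_semicont(1)[OF xs y yr y0 that, of n] by eventually_elim simp
  have up: "eventually (\<lambda>j. Mn n x0 {0..y0} - Mn n (xs j) {0..ys j} > - e') sequentially"
    if "e' > 0" for n e'
    using mun_semicont(2)[OF xs y yr y0 that, of n] by eventually_elim simp
  have "eventually (\<lambda>j. (\<Sum>n. (1/2) ^ (n + 1) * (Mn n (xs j) {0..ys j} - Mn n x0 {0..<y0})) > - e)
      sequentially"
    by (intro weighted_series_lower summable_half_powers bnd low e) auto
  with ys show "eventually (\<lambda>j. Mu (xs j) {0..ys j} > Mu x0 {0..<y0} - e) sequentially"
  proof eventually_elim
    case (elim j)
    from mu_diff[of "xs j" "{0..ys j}" x0 "{0..<y0}"] have "Mu (xs j) {0..ys j} - Mu x0 {0..<y0}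
        = ((ys j - y0) + (\<Sum>n. (1/2) ^ (n + 1) * (Mn n (xs j) {0..ys j} - Mn n x0 {0..<y0}))) / 2"
      by (simp only: leb)
    then show ?case using elim by (simp add: abs_less_iff)
  qed
  have "eventually (\<lambda>j. (\<Sum>n. (1/2) ^ (n + 1) * (Mn n x0 {0..y0} - Mn n (xs j) {0..ys j})) > - e)
      sequentially"
    by (intro weighted_series_lower summable_half_powers bnd up e) auto
  with ys show "eventually (\<lambda>j. Mu (xs j) {0..ys j} < Mu x0 {0..y0} + e) sequentially"
  proof eventually_elim
    case (elim j)
    from mu_diff[of x0 "{0..y0}" "xs j" "{0..ys j}"] have "Mu x0 {0..y0} - Mu (xs j) {0..ys j}
        = ((y0 - ys j) + (\<Sum>n. (1/2) ^ (n + 1) * (Mn n x0 {0..y0} - Mn n (xs j) {0..ys j}))) / 2"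
      by (simp only: leb)
    then show ?case using elim by (simp add: abs_less_iff)
  qed
qed

lemma semicontinuity_chains:
  assumes xs: "(\<lambda>j. tdist (xs j) x0) \<longlonglongrightarrow> 0" and ys: "ys \<longlonglongrightarrow> y0"
    and yr: "\<forall>j. ys j \<in> {0..1}" and y0: "y0 \<in> {0..1}"
  shows "(\<forall>n. ereal (Mn n x0 {0..<y0}) \<le> liminf (\<lambda>j. ereal (Mn n (xs j) {0..ys j}))
          \<and> liminf (\<lambda>j. ereal (Mn n (xs j) {0..ys j})) \<le> limsup (\<lambda>j. ereal (Mn n (xs j) {0..ys j}))
          \<and> limsup (\<lambda>j. ereal (Mn n (xs j) {0..ys j})) \<le> ereal (Mn n x0 {0..y0}))
    \<and> ereal (Mu x0 {0..<y0}) \<le> liminf (\<lambda>j. ereal (Mu (xs j) {0..ys j}))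
    \<and> liminf (\<lambda>j. ereal (Mu (xs j) {0..ys j})) \<le> limsup (\<lambda>j. ereal (Mu (xs j) {0..ys j}))
    \<and> limsup (\<lambda>j. ereal (Mu (xs j) {0..ys j})) \<le> ereal (Mu x0 {0..y0})"
  using liminf_limsup_between[OF mun_semicont[OF xs ys yr[rule_format] y0]]
    liminf_limsup_between[OF mu_semicont[OF xs ys yr[rule_format] y0]] by blast

lemma mu_endpoint_split:
  assumes "0 \<le> y"
  shows "Mu x {0..y} \<le> Mu x {0..<y} + Mu x {y}"
proof -
  define S where "S C = (\<Sum>n. (1/2) ^ (n + 1) * Mn n x C)" for C
  have split: "{0..y} = {0..<y} \<union> {y}" using assms by auto
  have "Mn n x {0..y} \<le> Mn n x {0..<y} + Mn n x {y}" for n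
    unfolding mun_def split image_Un by (intro M0_subadditive translate_borel) auto
  then have "S {0..y} \<le> S {0..<y} + S {y}" unfolding S_def
    by (subst suminf_add[OF summable_mun summable_mun])
      (intro suminf_le summable_mun summable_add; simp add: distrib_left[symmetric])
  moreover have "leb {0..y} \<le> leb {0..<y} + leb {y}"
    unfolding split by (rule leb_Un) auto
  ultimately show ?thesis unfolding mu_def S_def[symmetric] by (simp add: field_simps)
qed

text \<open>If \<open>mu_{x0}\<close> has no atom at \<open>y0\<close>, the lower and upper estimates coincide, so
  \<open>(x, y) \<mapsto> mu_x[0, y]\<close> is sequentially, hence genuinely, continuous at \<open>(x0, y0)\<close>.\<close>

lemma mu_discontinuity_atom:
  assumes y0: "y0 \<in> {0..1}"
    and discont: "\<not> (\<forall>e>0. \<exists>d>0. \<forall>x y. y \<in> {0..1} \<and> tdist x x0 < d \<and> \<bar>y - y0\<bar> < d \<longrightarrow>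
                      \<bar>Mu x {0..y} - Mu x0 {0..y0}\<bar> < e)"
  shows "Mu x0 {y0} > 0"
proof (rule ccontr)
  assume "\<not> Mu x0 {y0} > 0"
  then have closed_open: "Mu x0 {0..y0} \<le> Mu x0 {0..<y0}"
    using mu_endpoint_split[of y0 x0] y0 by simp
  have seq: "(\<lambda>j. Mu (xs j) {0..ys j}) \<longlonglongrightarrow> Mu x0 {0..y0}"
    if "(\<lambda>j. tdist (xs j) x0) \<longlonglongrightarrow> 0" "ys \<longlonglongrightarrow> y0" "\<forall>j. ys j \<in> {0..1}" for xs ys
  proof (rule tendstoI)
    fix e :: real assume e: "e > 0"
    note bounds = mu_semicont[OF that(1,2) that(3)[rule_format] y0 e]
    from bounds(1) bounds(2)
    have "eventually (\<lambda>j. \<bar>Mu (xs j) {0..ys j} - Mu x0 {0..y0}\<bar> < e) sequentially"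
      by eventually_elim (use closed_open in \<open>auto simp: abs_less_iff\<close>)
    then show "eventually (\<lambda>j. dist (Mu (xs j) {0..ys j}) (Mu x0 {0..y0}) < e) sequentially"
      by (simp add: dist_real_def)
  qed
  have "\<forall>e>0. \<exists>d>0. \<forall>x y. y \<in> {0..1} \<and> tdist x x0 < d \<and> \<bar>y - y0\<bar> < d \<longrightarrow>
      \<bar>Mu x {0..y} - Mu x0 {0..y0}\<bar> < e"
    by (rule tdist_sequential_continuity[where G = "\<lambda>x y. Mu x {0..y}"]) (rule seq)
  with discont show False by blast
qed

end

theorem corollary3:
  fixes \<alpha> :: real and r :: "real \<Rightarrow> real"
    and x1s y1s xb1 xb2 :: real and psi phi :: "real \<Rightarrow> real"
  assumes irr: "\<alpha> \<notin> \<rat>"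
    and r_cont: "continuous_on UNIV r"
    and r_per: "\<And>x. r (x + 1) = r x"
    and r_anti: "\<And>x. r (x + 1/2) = - r x"
    and r_0: "r 0 = 0" and r_half: "r (1/2) = 0"
    and r_pos: "\<And>x. 0 < x \<Longrightarrow> x < 1/2 \<Longrightarrow> 0 < r x \<and> r x < 1/4"
    and minimal: "minimal_S \<alpha> r"
    and x1s: "x1s \<in> \<rat>" "0.1 < x1s" "x1s < 0.2"
    and orbit: "\<And>m::int. \<And>z. z \<in> {(x1s, y1s), (x1s + 1/2, 1 - y1s)} \<Longrightarrow>
                  frac (snd (Spow \<alpha> r m z)) \<noteq> 0
                  \<and> frac (snd (Spow \<alpha> r m z) + r (fst (Spow \<alpha> r m z))) \<noteq> 0"
    and xb: "xb1 < x1s" "x1s < xb2" "0 < xb1" "xb2 < 1/2"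
    and psi_cont: "continuous_on {xb1..xb2} psi"
    and phi_cont: "continuous_on {xb1..xb2} phi"
    and psi_range: "\<And>x. x \<in> {xb1..xb2} \<Longrightarrow> psi x \<in> {0..1}"
    and phi_range: "\<And>x. x \<in> {xb1..xb2} \<Longrightarrow> phi x \<in> {0..1}"
    and bd: "psi xb1 = 0" "phi xb1 = 1" "psi xb2 = 1" "phi xb2 = 0"
    and lt: "\<And>x. x \<in> {xb1..<x1s} \<Longrightarrow> psi x < phi x"
    and gt: "\<And>x. x \<in> {x1s<..xb2} \<Longrightarrow> psi x > phi x"
    and eq: "psi x1s = phi x1s" "frac (psi x1s) = frac y1s"
  shows
   "(\<forall>(xs :: nat \<Rightarrow> real) (ys :: nat \<Rightarrow> real) x0 y0.
       (\<lambda>j. tdist (xs j) x0) \<longlonglongrightarrow> 0 \<and> ys \<longlonglongrightarrow> y0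
       \<and> (\<forall>j. ys j \<in> {0..1}) \<and> y0 \<in> {0..1} \<longrightarrow>
       (\<forall>n::nat.
          ereal (mun \<alpha> r xb1 xb2 x1s y1s psi phi n x0 {0..<y0})
            \<le> liminf (\<lambda>j. ereal (mun \<alpha> r xb1 xb2 x1s y1s psi phi n (xs j) {0..ys j}))
          \<and> liminf (\<lambda>j. ereal (mun \<alpha> r xb1 xb2 x1s y1s psi phi n (xs j) {0..ys j}))
            \<le> limsup (\<lambda>j. ereal (mun \<alpha> r xb1 xb2 x1s y1s psi phi n (xs j) {0..ys j}))
          \<and> limsup (\<lambda>j. ereal (mun \<alpha> r xb1 xb2 x1s y1s psi phi n (xs j) {0..ys j}))
            \<le> ereal (mun \<alpha> r xb1 xb2 x1s y1s psi phi n x0 {0..y0}))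
       \<and> ereal (mu \<alpha> r xb1 xb2 x1s y1s psi phi x0 {0..<y0})
            \<le> liminf (\<lambda>j. ereal (mu \<alpha> r xb1 xb2 x1s y1s psi phi (xs j) {0..ys j}))
       \<and> liminf (\<lambda>j. ereal (mu \<alpha> r xb1 xb2 x1s y1s psi phi (xs j) {0..ys j}))
            \<le> limsup (\<lambda>j. ereal (mu \<alpha> r xb1 xb2 x1s y1s psi phi (xs j) {0..ys j}))
       \<and> limsup (\<lambda>j. ereal (mu \<alpha> r xb1 xb2 x1s y1s psi phi (xs j) {0..ys j}))
            \<le> ereal (mu \<alpha> r xb1 xb2 x1s y1s psi phi x0 {0..y0}))
    \<and> (\<forall>x0 y0. y0 \<in> {0..1} \<and>
         \<not> (\<forall>e>0. \<exists>d>0. \<forall>x y. y \<in> {0..1} \<and> tdist x x0 < d \<and> \<bar>y - y0\<bar> < d \<longrightarrow>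
               \<bar>mu \<alpha> r xb1 xb2 x1s y1s psi phi x {0..y}
                 - mu \<alpha> r xb1 xb2 x1s y1s psi phi x0 {0..y0}\<bar> < e)
       \<longrightarrow> mu \<alpha> r xb1 xb2 x1s y1s psi phi x0 {y0} > 0)"
proof -
  interpret fibre_measures \<alpha> r x1s y1s xb1 xb2 psi phi
    using r_cont r_per xb psi_cont phi_cont psi_range phi_range bd lt gt eq orbit
    by unfold_locales auto
  show ?thesis using semicontinuity_chains mu_discontinuity_atom by blast
qed

end
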